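(* Let $\mathcal{A}$ be a weakly irreducible $Z$-tensor of order $m$ and dimension $n$, written $\mathcal{A}=s\mathcal{I}-\mathcal{B}$ with $s>0$ and $\mathcal{B}$ nonnegative. Then: (1) $\mathbb{PV}_{\lambda_{\min}(\mathcal{A})}(\mathcal{A})$ is finite, i.e. $\mathcal{A}$ has finitely many eigenvectors (up to scalar) associated with $\lambda_{\min}(\mathcal{A})$; (2) $\mathbb{PV}_{\lambda_{\min}(\mathcal{A})}(\mathcal{A})$, with the quasi-Hadamard product $\circ$ described below, is an abelian group isomorphic to $\mathfrak{D}^{(0)}(\mathcal{A})$; (3) $s(\mathcal{A})=|\mathbb{PV}_{\lambda_{\min}(\mathcal{A})}(\mathcal{A})|$.
   Context: A real tensor $\mathcal{A}=(a_{i_1\cdots i_m})$ of order $m$ and dimension $n$ has real entries indexed by $[n]^m$. For $x\in\mathbb{C}^n$, $(\mathcal{A}x^{m-1})_i=\sum_{i_2,\dots,i_m}a_{ii_2\cdots i_m}x_{i_2}\cdots x_{i_m}$; $\mathcal{I}$ is the identity tensor. $\lambda$ is an eigenvalue with eigenvector $x\neq 0$ if $\mathcal{A}x^{m-1}=\lambda x^{[m-1]}$, $x^{[m-1]}=(x_i^{m-1})_i$. An H-eigenvalue is an eigenvalue with a real eigenvector; $\lambda_{\min}(\mathcal{A})$ denotes the least H-eigenvalue and $\rho(\cdot)$ the spectral radius. $\mathbb{PV}_\lambda(\mathcal{A})=\{x\in\mathbb{P}^{n-1}:\mathcal{A}x^{m-1}=\lambda x^{[m-1]}\}$. A $Z$-tensor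 is a real tensor with all off-diagonal entries nonpositive, i.e. $\mathcal{A}=s\mathcal{I}-\mathcal{B}$ with $s>0$, $\mathcal{B}\ge 0$. $\mathcal{A}$ is weakly irreducible if the directed graph on $[n]$ having an arc $i\to j$ ($j\ne i$) whenever $a_{ii_2\cdots i_m}\neq 0$ for some $(i_2,\dots,i_m)$ with $j\in\{i_2,\dots,i_m\}$ is strongly connected. For an invertible diagonal $D=\mathrm{diag}(d_1,\dots,d_n)$, $D^{-(m-1)}\mathcal{A}D$ has entries $d_{i_1}^{-(m-1)}a_{i_1\cdots i_m}d_{i_2}\cdots d_{i_m}$; $\mathfrak{D}^{(0)}(\mathcal{A})=\{D:\mathcal{A}=D^{-(m-1)}\mathcal{A}D,\ d_1=1\}$ (a group under matrix multiplication) and $s(\mathcal{A})=|\mathfrak{D}^{(0)}(\mathcal{A})|$ is the stabilizing index. Group structure: $\mathbb{PV}_{\lambda_{\min}(\mathcal{A})}(\mathcal{A})=\mathbb{PV}_{\rho(\mathcal{B})}(\mathcal{B})$, and since $\mathcal{B}$ is nonnegative weakly irreducible, it has a positive (Perron) eigenvector $v_p$ for $\rho(\mathcal{B})$, normalized with first entry $1$, and every $y$ in this eigenvariety may be represented with $y_1=1$, in which case $|y|=v_p$. Put $D_y=\mathrm{diag}(y_1/|y_1|,\dots,y_n/|y_n|)$ and $y\circ\hat y:=D_yD_{\hat y}v_p$. *)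

theory Defs
  imports "HOL-Algebra.Algebra" "HOL-Analysis.Analysis"
begin

text \<open>Conventions: indices are 0-based, the index set [n] is {0..<n}.
 A tensor of order m and dimension n is a function on index lists; only
 lists of length m with entries < n are meaningful. Vectors in C^n are
 functions nat \<Rightarrow> complex vanishing outside {0..<n}.\<close>

definition idx_lists :: "nat \<Rightarrow> nat \<Rightarrow> nat list set" where
  "idx_lists k n = {is. length is = k \<and> set is \<subseteq> {0..<n}}"

definition vecs :: "nat \<Rightarrow> (nat \<Rightarrow> 'a::zero) set" where
  "vecs n = {x. \<forall>i\<ge>n. x i = 0}"

definition tapp :: "nat \<Rightarrow> nat \<Rightarrow> (nat list \<Rightarrow> 'a::comm_semiring_1) \<Rightarrow> (nat \<Rightarrow> 'a) \<Rightarrow> nat \<Rightarrow> 'a" where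
  "tapp m n A x i = (\<Sum>is\<in>idx_lists (m - 1) n. A (i # is) * prod_list (map x is))"

definition ident_tensor :: "nat list \<Rightarrow> real" where
  "ident_tensor is = (if (\<forall>j\<in>set is. j = hd is) then 1 else 0)"

definition is_eigpair :: "nat \<Rightarrow> nat \<Rightarrow> (nat list \<Rightarrow> real) \<Rightarrow> complex \<Rightarrow> (nat \<Rightarrow> complex) \<Rightarrow> bool" where
  "is_eigpair m n A lam x \<longleftrightarrow> x \<in> vecs n \<and> (\<exists>i<n. x i \<noteq> 0) \<and>
     (\<forall>i<n. tapp m n (\<lambda>is. complex_of_real (A is)) x i = lam * x i ^ (m - 1))"

definition eigenvalue :: "nat \<Rightarrow> nat \<Rightarrow> (nat list \<Rightarrow> real) \<Rightarrow> complex \<Rightarrow> bool" where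
  "eigenvalue m n A lam \<longleftrightarrow> (\<exists>x. is_eigpair m n A lam x)"

definition H_eigenvalue :: "nat \<Rightarrow> nat \<Rightarrow> (nat list \<Rightarrow> real) \<Rightarrow> real \<Rightarrow> bool" where
  "H_eigenvalue m n A lam \<longleftrightarrow> (\<exists>x::nat \<Rightarrow> real. x \<in> vecs n \<and> (\<exists>i<n. x i \<noteq> 0) \<and>
     (\<forall>i<n. tapp m n A x i = lam * x i ^ (m - 1)))"

definition lambda_min :: "nat \<Rightarrow> nat \<Rightarrow> (nat list \<Rightarrow> real) \<Rightarrow> real" where
  "lambda_min m n A = (LEAST lam. H_eigenvalue m n A lam)"

definition spectral_radius :: "nat \<Rightarrow> nat \<Rightarrow> (nat list \<Rightarrow> real) \<Rightarrow> real" where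
  "spectral_radius m n A = Sup {cmod lam | lam. eigenvalue m n A lam}"

text \<open>points of complex projective space P^{n-1}: classes of nonzero vectors\<close>
definition pclass :: "(nat \<Rightarrow> complex) \<Rightarrow> (nat \<Rightarrow> complex) set" where
  "pclass x = {(\<lambda>i. c * x i) | c. c \<noteq> 0}"

definition PV :: "nat \<Rightarrow> nat \<Rightarrow> (nat list \<Rightarrow> real) \<Rightarrow> complex \<Rightarrow> (nat \<Rightarrow> complex) set set" where
  "PV m n A lam = {pclass x | x. is_eigpair m n A lam x}"

definition weakly_irreducible :: "nat \<Rightarrow> nat \<Rightarrow> (nat list \<Rightarrow> real) \<Rightarrow> bool" where
  "weakly_irreducible m n A \<longleftrightarrow>
    (let E = {(i, j). i < n \<and> j < n \<and> j \<noteq> i \<and>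
               (\<exists>is\<in>idx_lists (m - 1) n. A (i # is) \<noteq> 0 \<and> j \<in> set is)}
     in \<forall>i<n. \<forall>j<n. (i, j) \<in> E\<^sup>*)"

definition perron_vec :: "nat \<Rightarrow> nat \<Rightarrow> (nat list \<Rightarrow> real) \<Rightarrow> nat \<Rightarrow> real" where
  "perron_vec m n B = (SOME v. v \<in> vecs n \<and> (\<forall>i<n. v i > 0) \<and> v 0 = 1 \<and>
      (\<forall>i<n. tapp m n B v i = spectral_radius m n B * v i ^ (m - 1)))"

definition prep :: "(nat \<Rightarrow> complex) set \<Rightarrow> nat \<Rightarrow> complex" where
  "prep P = (SOME y. y \<in> P \<and> y 0 = 1)"

text \<open>quasi-Hadamard product y o y' = D_y D_y' v_p (sgn z = z / |z|)\<close>
definition qhprod :: "nat \<Rightarrow> (nat \<Rightarrow> real) \<Rightarrow> (nat \<Rightarrow> complex) set \<Rightarrow> (nat \<Rightarrow> complex) set \<Rightarrow> (nat \<Rightarrow> complex) set" where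
  "qhprod n v P Q = pclass (\<lambda>i. if i < n then sgn (prep P i) * sgn (prep Q i) * complex_of_real (v i) else 0)"

definition PV_group :: "nat \<Rightarrow> nat \<Rightarrow> (nat list \<Rightarrow> real) \<Rightarrow> (nat list \<Rightarrow> real) \<Rightarrow> (nat \<Rightarrow> complex) set monoid" where
  "PV_group m n A B = \<lparr> carrier = PV m n A (complex_of_real (lambda_min m n A)),
     monoid.mult = qhprod n (perron_vec m n B),
     one = pclass (\<lambda>i. complex_of_real (perron_vec m n B i)) \<rparr>"

text \<open>D^(0)(A): invertible complex diagonal matrices D = diag(d) with d_1 = 1 and
  A = D^{-(m-1)} A D; entries outside [n] fixed to 1.\<close>
definition D0 :: "nat \<Rightarrow> nat \<Rightarrow> (nat list \<Rightarrow> real) \<Rightarrow> (nat \<Rightarrow> complex) set" where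
  "D0 m n A = {d. (\<forall>i<n. d i \<noteq> 0) \<and> (\<forall>i\<ge>n. d i = 1) \<and> d 0 = 1 \<and>
     (\<forall>is\<in>idx_lists m n. complex_of_real (A is) =
        inverse (d (hd is) ^ (m - 1)) * complex_of_real (A is) * prod_list (map d (tl is)))}"

definition D0_group :: "nat \<Rightarrow> nat \<Rightarrow> (nat list \<Rightarrow> real) \<Rightarrow> (nat \<Rightarrow> complex) monoid" where
  "D0_group m n A = \<lparr> carrier = D0 m n A, monoid.mult = (\<lambda>d e i. d i * e i), one = (\<lambda>_. 1) \<rparr>"

definition stabilizing_index :: "nat \<Rightarrow> nat \<Rightarrow> (nat list \<Rightarrow> real) \<Rightarrow> nat" where
  "stabilizing_index m n A = card (D0 m n A)"

end

theory Submission
  imports Defs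
begin

(*
  Write A = s I - B. The shift by s maps the eigenvectors of A for lambda_min(A) onto the
  eigenvectors of B for its spectral radius rho, and D0(A) = D0(B), because the two tensors
  differ only on the diagonal.

  For the nonnegative weakly irreducible B, rho is the Collatz-Wielandt infimum of the R with
  B x^{m-1} <= R x^{[m-1]} for some positive x. A Harnack-type bound confines normalised such x
  to a compact box, so the infimum is attained, and among the minimisers one with the largest
  number of strict rows has none: shrinking the strict coordinates would make a neighbouring
  row strict. This gives a positive eigenvector v, and comparison with v shows |lambda| <= rho
  for every eigenvalue lambda of B.

  If B y^{m-1} = rho y^{[m-1]}, then rho |y|^{[m-1]} <= B |y|^{m-1} forces |y| = t v, and the
  resulting equality in the triangle inequality aligns the phases of y along every positive
  entry of B, i.e. D_y lies in D0(B); conversely D v is an eigenvector for every D in D0(B).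
  So y |-> D_y is a bijection from the projective eigenvectors onto D0(B) which turns the
  quasi-Hadamard product into the product of diagonal matrices. D0(B) is finite: its entries
  are unimodular, and two elements whose arguments differ by less than pi/m coincide, since the
  phases of their quotient satisfy exact linear relations whose maximum spreads over the graph.
*)

lemma prod_list_map_scale:
  fixes c :: "'a::comm_semiring_1"
  shows "prod_list (map (\<lambda>i. c * x i) xs) = c ^ length xs * prod_list (map x xs)"
  by (induction xs) (auto simp: algebra_simps)

lemma prod_list_map_mult:
  fixes f g :: "'b \<Rightarrow> 'a::comm_monoid_mult"
  shows "prod_list (map (\<lambda>k. f k * g k) xs) = prod_list (map f xs) * prod_list (map g xs)"
  by (induction xs) (simp_all add: mult_ac)

lemma prod_list_map_inverse:
  fixes f :: "'b \<Rightarrow> 'a::field"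
  shows "prod_list (map (\<lambda>k. inverse (f k)) xs) = inverse (prod_list (map f xs))"
  by (induction xs) (simp_all add: inverse_mult_distrib mult.commute)

lemma prod_list_map_const: "prod_list (map (\<lambda>_. c) xs) = c ^ length xs"
  by (induction xs) auto

lemma prod_list_map_pos:
  fixes f :: "'b \<Rightarrow> 'a::linordered_semidom"
  assumes "\<forall>k\<in>set xs. 0 < f k"
  shows "0 < prod_list (map f xs)"
  using assms by (induction xs) auto

lemma prod_list_map_mono:
  fixes f g :: "'b \<Rightarrow> 'a::linordered_semidom"
  assumes "\<forall>k\<in>set xs. 0 \<le> f k \<and> f k \<le> g k"
  shows "prod_list (map f xs) \<le> prod_list (map g xs)"
  using assms
proof (induction xs)
  case (Cons a xs)
  have "0 \<le> prod_list (map f xs)"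
    using Cons.prems by (intro prod_list_nonneg) auto
  with Cons show ?case by (auto intro!: mult_mono)
qed simp

lemma prod_list_map_strict_mono:
  fixes f g :: "'b \<Rightarrow> 'a::linordered_semidom"
  assumes "\<forall>k\<in>set xs. 0 < f k \<and> f k \<le> g k" and "k0 \<in> set xs" and "f k0 < g k0"
  shows "prod_list (map f xs) < prod_list (map g xs)"
  using assms
proof (induction xs)
  case (Cons a xs)
  have f_pos: "0 < prod_list (map f xs)"
    using Cons.prems by (intro prod_list_map_pos) auto
  have le: "prod_list (map f xs) \<le> prod_list (map g xs)"
    using Cons.prems by (intro prod_list_map_mono) (auto simp: less_imp_le)
  show ?case
  proof (cases "k0 = a")
    case True
    have "f a * prod_list (map f xs) < g a * prod_list (map f xs)"
      using f_pos True Cons.prems by (intro mult_strict_right_mono) auto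
    also have "\<dots> \<le> g a * prod_list (map g xs)"
      using le Cons.prems by (auto intro: mult_left_mono)
    finally show ?thesis by simp
  next
    case False
    then have "prod_list (map f xs) < prod_list (map g xs)"
      using Cons by auto
    then show ?thesis
      using Cons.prems f_pos by (auto intro: mult_le_less_imp_less)
  qed
qed simp

lemma prod_list_map_eq_imp_eq:
  fixes f g :: "'b \<Rightarrow> 'a::linordered_semidom"
  assumes "\<forall>k\<in>set xs. 0 \<le> f k \<and> f k \<le> g k \<and> 0 < g k"
    and "prod_list (map f xs) = prod_list (map g xs)" and "k0 \<in> set xs"
  shows "f k0 = g k0"
proof (rule ccontr)
  assume "f k0 \<noteq> g k0"
  then have lt: "f k0 < g k0"
    using assms by force
  have g_pos: "0 < prod_list (map g xs)"
    using assms by (intro prod_list_map_pos) auto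
  show False
  proof (cases "\<forall>k\<in>set xs. 0 < f k")
    case True
    then have "prod_list (map f xs) < prod_list (map g xs)"
      using assms lt by (intro prod_list_map_strict_mono[of xs f g k0]) auto
    then show False
      using assms by simp
  next
    case False
    then obtain k where "k \<in> set xs" "f k = 0"
      using assms by force
    then have "prod_list (map f xs) = 0"
      by (force simp: prod_list_zero_iff)
    then show False
      using assms g_pos by simp
  qed
qed

lemma prod_list_map_lower_bound:
  fixes f :: "'b \<Rightarrow> 'a::linordered_semidom"
  assumes "\<forall>k\<in>set xs. a \<le> f k" and "0 \<le> a" and "k0 \<in> set xs"
  shows "f k0 * a ^ (length xs - 1) \<le> prod_list (map f xs)"
  using assms
proof (induction xs)
  case (Cons b xs)
  have f_nonneg: "\<forall>k\<in>set (b # xs). 0 \<le> f k"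
    using Cons.prems by force
  have rest: "a ^ length xs \<le> prod_list (map f xs)"
    using Cons.prems prod_list_map_mono[of xs "\<lambda>_. a" f] by (simp add: prod_list_map_const)
  show ?case
  proof (cases "k0 = b")
    case True
    then show ?thesis
      using rest f_nonneg by (auto intro: mult_left_mono)
  next
    case False
    then have k0: "k0 \<in> set xs"
      using Cons.prems by auto
    then have "f k0 * a ^ (length xs - 1) \<le> prod_list (map f xs)"
      using Cons by auto
    then have "a * (f k0 * a ^ (length xs - 1)) \<le> f b * prod_list (map f xs)"
      using Cons.prems f_nonneg by (intro mult_mono) auto
    moreover have "f k0 * a ^ (length (b # xs) - 1) = a * (f k0 * a ^ (length xs - 1))"
      using k0 by (cases xs) (auto simp: algebra_simps)
    ultimately show ?thesis
      by simp
  qed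
qed simp

lemma sum_list_map_eq_bound_imp_eq:
  fixes f :: "'b \<Rightarrow> real"
  assumes "\<forall>k\<in>set xs. f k \<le> c" and "sum_list (map f xs) = real (length xs) * c"
    and "k0 \<in> set xs"
  shows "f k0 = c"
  using assms
proof (induction xs)
  case (Cons b xs)
  have "sum_list (map f xs) \<le> sum_list (map (\<lambda>_. c) xs)"
    using Cons.prems by (intro sum_list_mono) auto
  also have "\<dots> = real (length xs) * c"
    by (induction xs) (auto simp: algebra_simps)
  finally have "f b = c"
    using Cons.prems by (auto simp: algebra_simps)
  with Cons show ?case
    by (auto simp: algebra_simps)
qed simp

lemma abs_sum_list_map_le:
  fixes f :: "'b \<Rightarrow> real"
  assumes "\<forall>k\<in>set xs. \<bar>f k\<bar> \<le> c"
  shows "\<bar>sum_list (map f xs)\<bar> \<le> real (length xs) * c"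
  using assms by (induction xs) (auto simp: algebra_simps)

lemma norm_prod_list_map:
  fixes y :: "'b \<Rightarrow> 'a::{real_normed_div_algebra, comm_ring_1}"
  shows "norm (prod_list (map y xs)) = prod_list (map (\<lambda>k. norm (y k)) xs)"
  by (induction xs) (simp_all add: norm_mult)

lemma sgn_prod_list_map:
  "sgn (prod_list (map (y :: 'b \<Rightarrow> complex) xs)) = prod_list (map (\<lambda>k. sgn (y k)) xs)"
  by (induction xs) (simp_all add: sgn_mult)

lemma of_real_prod_list_map:
  "of_real (prod_list (map y xs)) = prod_list (map (\<lambda>k. of_real (y k) :: 'a::real_algebra_1) xs)"
  by (induction xs) simp_all

lemma tendsto_prod_list_map:
  fixes f :: "nat \<Rightarrow> 'b \<Rightarrow> real"
  assumes "\<forall>i\<in>set xs. (\<lambda>k. f k i) \<longlonglongrightarrow> x i"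
  shows "(\<lambda>k. prod_list (map (f k) xs)) \<longlonglongrightarrow> prod_list (map x xs)"
  using assms by (induction xs) (auto intro!: tendsto_mult)

lemma sgn_of_real_pos_mult: "0 < r \<Longrightarrow> sgn (complex_of_real r * u) = sgn u"
  by (simp add: sgn_mult sgn_of_real)

lemma sgn_power_complex: "sgn ((x::complex) ^ k) = sgn x ^ k"
  by (induction k) (simp_all add: sgn_mult)

lemma complex_polar_sgn: "complex_of_real (cmod y) * sgn y = y"
  by (cases "y = 0") (simp_all add: sgn_eq)

lemma cnj_sgn_mult_self: "cnj (sgn z) * z = complex_of_real (cmod z)"
proof (cases "z = 0")
  case False
  have "cnj (sgn z) * z = z * cnj z / complex_of_real (cmod z)"
    by (simp add: sgn_eq mult.commute)
  also have "z * cnj z = complex_of_real (cmod z) * complex_of_real (cmod z)"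
    by (metis complex_norm_square of_real_mult power2_eq_square)
  finally show ?thesis
    using False by simp
qed simp

lemma norm_sum_eq_imp_common_phase:
  fixes z :: "'i \<Rightarrow> complex"
  assumes "finite I" and "cmod (sum z I) = (\<Sum>k\<in>I. cmod (z k))" and "k \<in> I"
  shows "z k = complex_of_real (cmod (z k)) * sgn (sum z I)"
proof -
  define u where "u = sgn (sum z I)"
  have "cmod u \<le> 1"
    by (simp add: u_def norm_sgn)
  then have Re_le: "Re (cnj u * z j) \<le> cmod (z j)" for j
    using complex_Re_le_cmod[of "cnj u * z j"] mult_right_le_one_le[of "cmod (z j)" "cmod u"]
    by (simp add: norm_mult mult.commute)
  have "(\<Sum>j\<in>I. Re (cnj u * z j)) = Re (cnj u * sum z I)"
    by (simp add: sum_distrib_left)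
  also have "\<dots> = (\<Sum>j\<in>I. cmod (z j))"
    using assms(2) by (simp add: u_def cnj_sgn_mult_self)
  finally have Re_eq: "Re (cnj u * z k) = cmod (z k)"
    using sum_mono_inv[of "\<lambda>j. Re (cnj u * z j)" I "\<lambda>j. cmod (z j)" k] Re_le assms by blast
  show ?thesis
  proof (cases "sum z I = 0")
    case True
    then have "(\<Sum>j\<in>I. cmod (z j)) = 0"
      using assms by simp
    then show ?thesis
      using assms sum_nonneg_eq_0_iff[of I "\<lambda>j. cmod (z j)"] by auto
  next
    case False
    have u_unit: "u * cnj u = 1"
      using False complex_norm_square[of u] by (simp add: u_def norm_sgn)
    have "cmod (cnj u * z k) = cmod (z k)"
      using False by (simp add: u_def norm_mult norm_sgn)
    then have "Im (cnj u * z k) = 0"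
      using Re_eq cmod_power2[of "cnj u * z k"] by simp
    then have "cnj u * z k = complex_of_real (cmod (z k))"
      using Re_eq by (simp add: complex_eq_iff)
    then have "u * (cnj u * z k) = u * complex_of_real (cmod (z k))"
      by simp
    moreover have "u * (cnj u * z k) = z k"
      by (simp only: mult.assoc[symmetric] u_unit mult_1_left)
    ultimately show ?thesis
      by (metis u_def mult.commute)
  qed
qed

lemma cis_prod_list_map: "prod_list (map (\<lambda>k. cis (\<theta> k)) xs) = cis (sum_list (map \<theta> xs))"
  by (induction xs) (simp_all add: cis_mult)

lemma cis_eq_imp_2pi_multiple:
  assumes "cis a = cis b"
  shows "\<exists>k::int. a = b + 2 * pi * of_int k"
proof -
  obtain k :: int where "\<i> * complex_of_real a = \<i> * complex_of_real b + complex_of_real (of_int (2 * k) * pi) * \<i>"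
    using assms exp_eq[of "\<i> * complex_of_real a" "\<i> * complex_of_real b"] by (auto simp: cis_conv_exp)
  then have "Im (\<i> * complex_of_real a) = Im (\<i> * complex_of_real b + complex_of_real (of_int (2 * k) * pi) * \<i>)"
    by simp
  then show ?thesis
    by (intro exI[of _ k]) simp
qed

lemma cis_Arg_unimodular:
  assumes "cmod z = 1"
  shows "cis (Arg z) = z"
proof -
  have "z \<noteq> 0"
    using assms by auto
  then show ?thesis
    using assms by (simp add: cis_Arg sgn_eq)
qed

lemma cis_eq_1_imp_zero:
  assumes "cis a = 1" and "\<bar>a\<bar> < pi"
  shows "a = 0"
proof -
  obtain k :: int where k: "a = 2 * pi * of_int k"
    using cis_eq_imp_2pi_multiple[of a 0] assms(1) by auto
  then have "pi * (2 * \<bar>of_int k\<bar>) < pi * 1"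
    using assms(2) by (simp add: abs_mult)
  then have "2 * \<bar>real_of_int k\<bar> < 1"
    using mult_less_cancel_left_pos[OF pi_gt_zero] by blast
  then have "k = 0"
    by linarith
  then show ?thesis
    using k by simp
qed

lemma floor_mult_eq_imp_dist_less:
  fixes a b c :: real
  assumes "\<lfloor>c * a\<rfloor> = \<lfloor>c * b\<rfloor>" and "0 < c"
  shows "\<bar>a - b\<bar> < 1 / c"
proof -
  have "\<bar>c * a - c * b\<bar> < 1"
    using assms(1) floor_correct[of "c * a"] floor_correct[of "c * b"] by linarith
  then have "c * \<bar>a - b\<bar> < 1"
    using assms(2) by (simp add: abs_mult right_diff_distrib[symmetric])
  then show ?thesis
    using assms(2) by (simp add: field_simps)
qed

lemma ex_min_below:
  fixes f :: "nat \<Rightarrow> 'a::linorder"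
  assumes "0 < n"
  shows "\<exists>i0<n. \<forall>j<n. f i0 \<le> f j"
proof -
  have fin: "finite (f ` {0..<n})" "f ` {0..<n} \<noteq> {}"
    using assms by auto
  obtain i0 where "i0 \<in> {0..<n}" "f i0 = Min (f ` {0..<n})"
    using Min_in[OF fin] by auto
  then show ?thesis
    using Min_le[OF fin(1)] by (intro exI[of _ i0]) auto
qed

lemma ex_max_below:
  fixes f :: "nat \<Rightarrow> 'a::linorder"
  assumes "0 < n"
  shows "\<exists>i0<n. \<forall>j<n. f j \<le> f i0"
proof -
  have fin: "finite (f ` {0..<n})" "f ` {0..<n} \<noteq> {}"
    using assms by auto
  obtain i0 where "i0 \<in> {0..<n}" "f i0 = Max (f ` {0..<n})"
    using Max_in[OF fin] by auto
  then show ?thesis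
    using Max_ge[OF fin(1)] by (intro exI[of _ i0]) auto
qed

lemma bounded_seq_convergent_subseq_coords:
  fixes f :: "nat \<Rightarrow> nat \<Rightarrow> real"
  assumes "\<And>k i. i < N \<Longrightarrow> \<bar>f k i\<bar> \<le> C"
  shows "\<exists>\<sigma> l. strict_mono \<sigma> \<and> (\<forall>i<N. (\<lambda>k. f (\<sigma> k) i) \<longlonglongrightarrow> l i)"
  using assms
proof (induction N)
  case 0
  show ?case
    by (intro exI[of _ id]) (simp add: strict_mono_def)
next
  case (Suc N)
  obtain \<sigma> l where \<sigma>: "strict_mono \<sigma>" and conv: "\<forall>i<N. (\<lambda>k. f (\<sigma> k) i) \<longlonglongrightarrow> l i"
    using Suc by force
  have "bounded (range (\<lambda>k. f (\<sigma> k) N))"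
    unfolding bounded_iff using Suc.prems by (intro exI[of _ C]) auto
  then obtain l' \<tau> where \<tau>: "strict_mono \<tau>" and conv': "((\<lambda>k. f (\<sigma> k) N) \<circ> \<tau>) \<longlonglongrightarrow> l'"
    using bounded_imp_convergent_subsequence by blast
  have "(\<lambda>k. f ((\<sigma> \<circ> \<tau>) k) i) \<longlonglongrightarrow> (l(N := l')) i" if "i < Suc N" for i
  proof (cases "i = N")
    case False
    then have "(\<lambda>k. f (\<sigma> k) i) \<longlonglongrightarrow> l i"
      using conv that by simp
    from LIMSEQ_subseq_LIMSEQ[OF this \<tau>] show ?thesis
      using False by (simp add: o_def)
  qed (use conv' in \<open>simp add: o_def\<close>)
  then show ?case
    using strict_mono_o[OF \<sigma> \<tau>] by blast
qed

lemma finite_idx_lists: "finite (idx_lists k n)"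
  using finite_lists_length_eq[of "{0..<n}" k] unfolding idx_lists_def by (simp add: conj_commute)

lemma Cons_in_idx_lists_iff: "i # is \<in> idx_lists (Suc k) n \<longleftrightarrow> i < n \<and> is \<in> idx_lists k n"
  unfolding idx_lists_def by auto

lemma idx_lists_length: "is \<in> idx_lists k n \<Longrightarrow> length is = k"
  unfolding idx_lists_def by auto

lemma idx_lists_entry: "is \<in> idx_lists k n \<Longrightarrow> j \<in> set is \<Longrightarrow> j < n"
  unfolding idx_lists_def by auto

lemma tapp_cong:
  assumes "\<forall>i<n. x i = y i"
  shows "tapp m n A x j = tapp m n A y j"
  unfolding tapp_def
proof (rule sum.cong[OF refl])
  fix "is"
  assume "is \<in> idx_lists (m - 1) n"
  then have "map x is = map y is"
    using assms by (auto dest: idx_lists_entry)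
  then show "A (j # is) * prod_list (map x is) = A (j # is) * prod_list (map y is)"
    by (simp only:)
qed

lemma tapp_scale: "tapp m n A (\<lambda>i. c * x i) j = c ^ (m - 1) * tapp m n A x j"
  unfolding tapp_def sum_distrib_left
  by (intro sum.cong refl) (simp add: prod_list_map_scale idx_lists_length algebra_simps)

lemma tapp_of_real:
  "tapp m n (\<lambda>is. of_real (A is)) (\<lambda>i. of_real (x i)) j = (of_real (tapp m n A x j) :: 'a::{real_algebra_1, comm_ring_1})"
  unfolding tapp_def by (simp add: of_real_prod_list_map)

lemma tapp_ident:
  fixes x :: "nat \<Rightarrow> 'a::real_field"
  assumes "1 \<le> m" and "i < n"
  shows "tapp m n (\<lambda>is. of_real (ident_tensor is)) x i = x i ^ (m - 1)"
proof -
  have diag: "replicate (m - 1) i \<in> idx_lists (m - 1) n"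
    using assms unfolding idx_lists_def by auto
  have "ident_tensor (i # is) = (if is = replicate (m - 1) i then 1 else 0)"
    if "is \<in> idx_lists (m - 1) n" for "is"
  proof -
    have "(\<forall>j\<in>set is. j = i) \<longleftrightarrow> is = replicate (m - 1) i"
      using idx_lists_length[OF that] by (metis in_set_replicate replicate_length_same)
    then show ?thesis
      unfolding ident_tensor_def by simp
  qed
  then have "tapp m n (\<lambda>is. of_real (ident_tensor is)) x i
      = (\<Sum>is\<in>idx_lists (m - 1) n. if is = replicate (m - 1) i then prod_list (map x is) else 0)"
    unfolding tapp_def by (intro sum.cong refl) simp
  also have "\<dots> = x i ^ (m - 1)"
    using diag finite_idx_lists by (simp add: sum.delta)
  finally show ?thesis .
qed

lemma tapp_nonneg:
  fixes A :: "nat list \<Rightarrow> real"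
  assumes "\<forall>is\<in>idx_lists (m - 1) n. 0 \<le> A (j # is)" and "\<forall>i<n. 0 \<le> x i"
  shows "0 \<le> tapp m n A x j"
  unfolding tapp_def
proof (rule sum_nonneg)
  fix "is"
  assume "is" : "is \<in> idx_lists (m - 1) n"
  then have "0 \<le> prod_list (map x is)"
    using assms(2) by (intro prod_list_nonneg) (auto dest: idx_lists_entry)
  then show "0 \<le> A (j # is) * prod_list (map x is)"
    using assms(1) "is" by simp
qed

lemma tapp_mono:
  fixes A :: "nat list \<Rightarrow> real"
  assumes "\<forall>is\<in>idx_lists (m - 1) n. 0 \<le> A (j # is)" and "\<forall>i<n. 0 \<le> x i \<and> x i \<le> y i"
  shows "tapp m n A x j \<le> tapp m n A y j"
  unfolding tapp_def
proof (rule sum_mono)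
  fix "is"
  assume "is" : "is \<in> idx_lists (m - 1) n"
  then have "prod_list (map x is) \<le> prod_list (map y is)"
    using assms(2) by (intro prod_list_map_mono) (auto dest: idx_lists_entry)
  then show "A (j # is) * prod_list (map x is) \<le> A (j # is) * prod_list (map y is)"
    using assms(1) "is" by (simp add: mult_left_mono)
qed

lemma tapp_strict_mono:
  fixes A :: "nat list \<Rightarrow> real"
  assumes "\<forall>is\<in>idx_lists (m - 1) n. 0 \<le> A (j # is)" and "\<forall>i<n. 0 < x i \<and> x i \<le> y i"
    and "is0 \<in> idx_lists (m - 1) n" and "0 < A (j # is0)" and "k \<in> set is0" and "x k < y k"
  shows "tapp m n A x j < tapp m n A y j"
  unfolding tapp_def
proof (rule sum_strict_mono_ex1[OF finite_idx_lists])
  show "\<forall>is\<in>idx_lists (m - 1) n. A (j # is) * prod_list (map x is) \<le> A (j # is) * prod_list (map y is)"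
  proof
    fix "is"
    assume "is" : "is \<in> idx_lists (m - 1) n"
    then have "prod_list (map x is) \<le> prod_list (map y is)"
      using assms(2) by (intro prod_list_map_mono) (auto dest: idx_lists_entry)
    then show "A (j # is) * prod_list (map x is) \<le> A (j # is) * prod_list (map y is)"
      using assms(1) "is" by (simp add: mult_left_mono)
  qed
  have "prod_list (map x is0) < prod_list (map y is0)"
    using assms(2,3,5,6) by (intro prod_list_map_strict_mono[of is0 x y k]) (auto dest: idx_lists_entry)
  then show "\<exists>is\<in>idx_lists (m - 1) n. A (j # is) * prod_list (map x is) < A (j # is) * prod_list (map y is)"
    using assms(3,4) by (intro bexI[of _ is0]) auto
qed

lemma term_le_tapp:
  fixes A :: "nat list \<Rightarrow> real"
  assumes "\<forall>is\<in>idx_lists (m - 1) n. 0 \<le> A (j # is)" and "\<forall>i<n. 0 \<le> x i"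
    and "is0 \<in> idx_lists (m - 1) n"
  shows "A (j # is0) * prod_list (map x is0) \<le> tapp m n A x j"
  unfolding tapp_def
proof (rule member_le_sum[OF assms(3) _ finite_idx_lists])
  fix "is"
  assume "is" : "is \<in> idx_lists (m - 1) n - {is0}"
  then have "0 \<le> prod_list (map x is)"
    using assms(2) by (intro prod_list_nonneg) (auto dest: idx_lists_entry)
  then show "0 \<le> A (j # is) * prod_list (map x is)"
    using assms(1) "is" by simp
qed

lemma norm_tapp_le:
  fixes A :: "nat list \<Rightarrow> real"
  assumes "\<forall>is\<in>idx_lists (m - 1) n. 0 \<le> A (j # is)"
  shows "cmod (tapp m n (\<lambda>is. complex_of_real (A is)) y j) \<le> tapp m n A (\<lambda>i. cmod (y i)) j"
proof -
  have "cmod (tapp m n (\<lambda>is. complex_of_real (A is)) y j)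
      \<le> (\<Sum>is\<in>idx_lists (m - 1) n. cmod (complex_of_real (A (j # is)) * prod_list (map y is)))"
    unfolding tapp_def by (rule norm_sum)
  also have "\<dots> = tapp m n A (\<lambda>i. cmod (y i)) j"
    unfolding tapp_def using assms by (intro sum.cong refl) (simp add: norm_mult norm_prod_list_map)
  finally show ?thesis .
qed

lemma tapp_tendsto:
  fixes A :: "nat list \<Rightarrow> real" and f :: "nat \<Rightarrow> nat \<Rightarrow> real"
  assumes "\<forall>i<n. (\<lambda>k. f k i) \<longlonglongrightarrow> x i"
  shows "(\<lambda>k. tapp m n A (f k) j) \<longlonglongrightarrow> tapp m n A x j"
  unfolding tapp_def
proof (rule tendsto_sum)
  fix "is"
  assume "is \<in> idx_lists (m - 1) n"
  then have "\<forall>i\<in>set is. (\<lambda>k. f k i) \<longlonglongrightarrow> x i"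
    using assms by (auto dest: idx_lists_entry)
  then show "(\<lambda>k. A (j # is) * prod_list (map (f k) is)) \<longlonglongrightarrow> A (j # is) * prod_list (map x is)"
    by (intro tendsto_mult_left tendsto_prod_list_map)
qed

section \<open>Diagonal similarities fixing a tensor\<close>

lemma hd_in_idx_lists: "1 \<le> m \<Longrightarrow> l \<in> idx_lists m n \<Longrightarrow> hd l < n"
  unfolding idx_lists_def by (cases l) auto

lemma of_real_eq_inverse_mult_iff:
  assumes "p \<noteq> 0"
  shows "complex_of_real a = inverse p * complex_of_real a * q \<longleftrightarrow> a = 0 \<or> q = p"
proof (cases "a = 0")
  case False
  have "inverse p * complex_of_real a * q = complex_of_real a \<longleftrightarrow> complex_of_real a * q = complex_of_real a * p"
    using assms by (auto simp: field_simps)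
  also have "\<dots> \<longleftrightarrow> q = p"
    using False by simp
  finally show ?thesis
    using False by auto
qed simp

lemma D0_iff:
  assumes "1 \<le> m"
  shows "d \<in> D0 m n T \<longleftrightarrow> (\<forall>i<n. d i \<noteq> 0) \<and> (\<forall>i\<ge>n. d i = 1) \<and> d 0 = 1 \<and>
     (\<forall>l\<in>idx_lists m n. T l = 0 \<or> prod_list (map d (tl l)) = d (hd l) ^ (m - 1))"
proof -
  have "complex_of_real (T l) = inverse (d (hd l) ^ (m - 1)) * complex_of_real (T l) * prod_list (map d (tl l))
      \<longleftrightarrow> T l = 0 \<or> prod_list (map d (tl l)) = d (hd l) ^ (m - 1)"
    if "\<forall>i<n. d i \<noteq> 0" and "l \<in> idx_lists m n" for l
    using that hd_in_idx_lists[OF assms] by (intro of_real_eq_inverse_mult_iff) auto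
  then show ?thesis
    unfolding D0_def by blast
qed

lemma D0_nonzero: "d \<in> D0 m n T \<Longrightarrow> d i \<noteq> 0"
  unfolding D0_def by (cases "i < n") auto

lemma D0_first: "d \<in> D0 m n T \<Longrightarrow> d 0 = 1"
  unfolding D0_def by blast

lemma D0_outside: "d \<in> D0 m n T \<Longrightarrow> n \<le> i \<Longrightarrow> d i = 1"
  unfolding D0_def by blast

lemma D0_one: "1 \<le> m \<Longrightarrow> (\<lambda>_. 1) \<in> D0 m n T"
  unfolding D0_iff by (simp add: prod_list_map_const)

lemma D0_mult:
  assumes "1 \<le> m" and "d \<in> D0 m n T" and "e \<in> D0 m n T"
  shows "(\<lambda>i. d i * e i) \<in> D0 m n T"
proof -
  have prod: "prod_list (map (\<lambda>i. d i * e i) (tl l)) = (d (hd l) * e (hd l)) ^ (m - 1)"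
    if "l \<in> idx_lists m n" and "T l \<noteq> 0" for l
  proof -
    have "prod_list (map d (tl l)) = d (hd l) ^ (m - 1)" "prod_list (map e (tl l)) = e (hd l) ^ (m - 1)"
      using assms that unfolding D0_iff[OF assms(1)] by auto
    then show ?thesis
      by (simp add: prod_list_map_mult power_mult_distrib)
  qed
  show ?thesis
    unfolding D0_iff[OF assms(1)]
  proof (intro conjI allI impI ballI)
    show "d i * e i \<noteq> 0" for i
      using assms(2,3) by (simp add: D0_nonzero)
    show "d i * e i = 1" if "n \<le> i" for i
      using assms(2,3) that by (simp add: D0_outside)
    show "d 0 * e 0 = 1"
      using assms(2,3) by (simp add: D0_first)
    show "T l = 0 \<or> prod_list (map (\<lambda>i. d i * e i) (tl l)) = (d (hd l) * e (hd l)) ^ (m - 1)"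
      if "l \<in> idx_lists m n" for l
      using prod[OF that] by blast
  qed
qed

lemma D0_inverse:
  assumes "1 \<le> m" and "d \<in> D0 m n T"
  shows "(\<lambda>i. inverse (d i)) \<in> D0 m n T"
proof -
  have prod: "prod_list (map (\<lambda>i. inverse (d i)) (tl l)) = inverse (d (hd l)) ^ (m - 1)"
    if "l \<in> idx_lists m n" and "T l \<noteq> 0" for l
  proof -
    have "prod_list (map d (tl l)) = d (hd l) ^ (m - 1)"
      using assms that unfolding D0_iff[OF assms(1)] by auto
    then show ?thesis
      by (simp add: prod_list_map_inverse power_inverse)
  qed
  show ?thesis
    unfolding D0_iff[OF assms(1)]
  proof (intro conjI allI impI ballI)
    show "inverse (d i) \<noteq> 0" for i
      using assms(2) by (simp add: D0_nonzero)
    show "inverse (d i) = 1" if "n \<le> i" for i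
      using assms(2) that by (simp add: D0_outside)
    show "inverse (d 0) = 1"
      using assms(2) by (simp add: D0_first)
    show "T l = 0 \<or> prod_list (map (\<lambda>i. inverse (d i)) (tl l)) = inverse (d (hd l)) ^ (m - 1)"
      if "l \<in> idx_lists m n" for l
      using prod[OF that] by blast
  qed
qed

lemma D0_group_comm_group:
  assumes "1 \<le> m"
  shows "comm_group (D0_group m n T)"
proof (rule comm_groupI)
  fix d
  assume "d \<in> carrier (D0_group m n T)"
  then have d: "d \<in> D0 m n T"
    by (simp add: D0_group_def)
  then have "(\<lambda>i. inverse (d i) * d i) = (\<lambda>_. 1)"
    by (simp add: D0_nonzero)
  then show "\<exists>e\<in>carrier (D0_group m n T). e \<otimes>\<^bsub>D0_group m n T\<^esub> d = \<one>\<^bsub>D0_group m n T\<^esub>"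
    using D0_inverse[OF assms d] unfolding D0_group_def by (intro bexI[of _ "\<lambda>i. inverse (d i)"]) auto
qed (simp_all add: D0_group_def D0_one[OF assms] D0_mult[OF assms] mult_ac)

definition wi_edges :: "nat \<Rightarrow> nat \<Rightarrow> (nat list \<Rightarrow> real) \<Rightarrow> (nat \<times> nat) set" where
  "wi_edges m n T = {(i, j). i < n \<and> j < n \<and> j \<noteq> i \<and>
     (\<exists>is\<in>idx_lists (m - 1) n. T (i # is) \<noteq> 0 \<and> j \<in> set is)}"

lemma weakly_irreducible_iff: "weakly_irreducible m n T \<longleftrightarrow> (\<forall>i<n. \<forall>j<n. (i, j) \<in> (wi_edges m n T)\<^sup>*)"
  unfolding weakly_irreducible_def wi_edges_def Let_def ..

lemma weakly_irreducible_propagate: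
  assumes "weakly_irreducible m n T" and "i0 < n" and "P i0"
    and edge_step: "\<And>i j. P i \<Longrightarrow> (i, j) \<in> wi_edges m n T \<Longrightarrow> P j"
    and "j < n"
  shows "P j"
proof -
  have "(i0, j) \<in> (wi_edges m n T)\<^sup>*"
    using assms(1,2,5) unfolding weakly_irreducible_iff by simp
  then show ?thesis
  proof (induction rule: rtrancl_induct)
    case base
    show ?case
      by (fact assms(3))
  next
    case (step i j)
    show ?case
      using step.IH step.hyps(2) by (rule edge_step)
  qed
qed

lemma weakly_irreducible_exit_edge:
  assumes "weakly_irreducible m n T" and "S \<subseteq> {0..<n}" and "S \<noteq> {}" and "S \<noteq> {0..<n}"
  shows "\<exists>i\<in>S. \<exists>j. (i, j) \<in> wi_edges m n T \<and> j \<notin> S"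
proof (rule ccontr)
  assume closed: "\<not> ?thesis"
  obtain i0 where i0: "i0 \<in> S"
    using assms(3) by blast
  have "j \<in> S" if "j < n" for j
    by (rule weakly_irreducible_propagate[of m n T i0 "\<lambda>i. i \<in> S"])
      (use assms(1,2) i0 closed that in auto)
  then show False
    using assms(2,4) by auto
qed

lemma weakly_irreducible_layers:
  assumes wi: "weakly_irreducible m n T" and i0: "i0 \<in> S 0"
    and sub: "\<And>L. S L \<subseteq> {0..<n}" and mono: "\<And>L. S L \<subseteq> S (Suc L)"
    and step: "\<And>L i j. i \<in> S L \<Longrightarrow> (i, j) \<in> wi_edges m n T \<Longrightarrow> j \<in> S (Suc L)"
  shows "S n = {0..<n}"
proof -
  have fin: "finite (S L)" for L
    using sub finite_subset by blast
  have i0_S: "i0 \<in> S L" for L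
    by (induction L) (use i0 mono in auto)
  have card_S: "min (Suc L) n \<le> card (S L)" for L
  proof (induction L)
    case 0
    have "0 < card (S 0)"
      using i0_S[of 0] fin[of 0] card_gt_0_iff by blast
    then show ?case
      by simp
  next
    case (Suc L)
    show ?case
    proof (cases "S L = {0..<n}")
      case True
      then have "S (Suc L) = {0..<n}"
        using mono[of L] sub[of "Suc L"] by auto
      then show ?thesis
        by simp
    next
      case False
      then obtain i j where "i \<in> S L" "(i, j) \<in> wi_edges m n T" "j \<notin> S L"
        using weakly_irreducible_exit_edge[OF wi sub, of L] i0_S[of L] by blast
      then have "S L \<subset> S (Suc L)"
        using mono[of L] step by blast
      then have "card (S L) < card (S (Suc L))"
        using fin by (intro psubset_card_mono)
      then show ?thesis
        using Suc.IH by simp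
    qed
  qed
  have "n \<le> card (S n)"
    using card_S[of n] by simp
  then show ?thesis
    using sub[of n] by (metis card_atLeastLessThan card_seteq diff_zero finite_atLeastLessThan)
qed

lemma pclass_scale:
  assumes "c \<noteq> 0"
  shows "pclass (\<lambda>i. c * x i) = pclass x"
proof -
  have "(\<exists>c'. c' \<noteq> 0 \<and> z = (\<lambda>i. c' * (c * x i))) \<longleftrightarrow> (\<exists>c'. c' \<noteq> 0 \<and> z = (\<lambda>i. c' * x i))" for z
  proof
    assume "\<exists>c'. c' \<noteq> 0 \<and> z = (\<lambda>i. c' * (c * x i))"
    then show "\<exists>c'. c' \<noteq> 0 \<and> z = (\<lambda>i. c' * x i)"
      using assms by (metis mult.assoc no_zero_divisors)
  next
    assume "\<exists>c'. c' \<noteq> 0 \<and> z = (\<lambda>i. c' * x i)"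
    then obtain c' where "c' \<noteq> 0" "z = (\<lambda>i. c' * x i)"
      by blast
    then show "\<exists>c'. c' \<noteq> 0 \<and> z = (\<lambda>i. c' * (c * x i))"
      using assms by (intro exI[of _ "c' / c"]) auto
  qed
  then show ?thesis
    unfolding pclass_def by blast
qed

lemma prep_pclass:
  assumes "x 0 = 1"
  shows "prep (pclass x) = x"
  unfolding prep_def
proof (rule some_equality)
  show "x \<in> pclass x \<and> x 0 = 1"
    using assms unfolding pclass_def by (auto intro!: exI[of _ 1])
next
  fix y
  assume "y \<in> pclass x \<and> y 0 = 1"
  then obtain c where "y = (\<lambda>i. c * x i)" "y 0 = 1"
    unfolding pclass_def by blast
  then show "y = x"
    using assms by simp
qed

lemma is_eigpair_scale:
  assumes "is_eigpair m n T lam y" and "c \<noteq> 0"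
  shows "is_eigpair m n T lam (\<lambda>i. c * y i)"
  using assms unfolding is_eigpair_def vecs_def by (simp add: tapp_scale power_mult_distrib mult_ac)

section \<open>The Perron vector of a nonnegative weakly irreducible tensor\<close>

text \<open>Along an edge the ratio of a sub-eigenvector to its minimum grows at most by
  \<open>c \<mapsto> q * c ^ k\<close> (with \<open>k = m - 1\<close>), and every index is reached in at most \<open>n\<close> steps.\<close>

primrec harnack_seq :: "real \<Rightarrow> nat \<Rightarrow> nat \<Rightarrow> real" where
  "harnack_seq q k 0 = 1"
| "harnack_seq q k (Suc L) = q * harnack_seq q k L ^ k"

lemma harnack_seq_ge_1:
  assumes "1 \<le> q"
  shows "1 \<le> harnack_seq q k L"
proof (induction L)
  case (Suc L)
  then have "1 \<le> harnack_seq q k L ^ k"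
    by (simp add: one_le_power)
  then have "1 * 1 \<le> q * harnack_seq q k L ^ k"
    using assms by (intro mult_mono) auto
  then show ?case
    by simp
qed simp

lemma harnack_seq_mono:
  assumes "1 \<le> q" and "1 \<le> k"
  shows "harnack_seq q k L \<le> harnack_seq q k (Suc L)"
proof -
  have c: "1 \<le> harnack_seq q k L"
    using assms(1) by (rule harnack_seq_ge_1)
  have "harnack_seq q k L \<le> harnack_seq q k L ^ k"
    using c assms(2) power_increasing[of 1 k "harnack_seq q k L"] by simp
  also have "\<dots> \<le> q * harnack_seq q k L ^ k"
    using assms(1) c mult_right_mono[of 1 q "harnack_seq q k L ^ k"] by simp
  finally show ?thesis
    by simp
qed

locale nonneg_wi_tensor =
  fixes m n :: nat and B :: "nat list \<Rightarrow> real"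
  assumes order_ge_2: "2 \<le> m" and dim_pos: "0 < n"
    and nonneg: "\<forall>is\<in>idx_lists m n. 0 \<le> B is"
    and weakly_irr: "weakly_irreducible m n B"
begin

lemma order_pos: "1 \<le> m"
  using order_ge_2 by simp

lemma Cons_in_idx_lists: "i < n \<Longrightarrow> is \<in> idx_lists (m - 1) n \<Longrightarrow> i # is \<in> idx_lists m n"
  using Cons_in_idx_lists_iff[of i "is" "m - 1" n] order_ge_2 by simp

lemma nonneg_row: "i < n \<Longrightarrow> \<forall>is\<in>idx_lists (m - 1) n. 0 \<le> B (i # is)"
  using nonneg Cons_in_idx_lists by blast

lemma edge_imp_pos_entry:
  assumes "(i, j) \<in> wi_edges m n B"
  shows "\<exists>is\<in>idx_lists (m - 1) n. 0 < B (i # is) \<and> j \<in> set is"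
  using assms nonneg_row[of i] unfolding wi_edges_def by (force simp: order.order_iff_strict)

lemma edge_less: "(i, j) \<in> wi_edges m n B \<Longrightarrow> i < n \<and> j < n"
  unfolding wi_edges_def by simp

definition total_mass :: real where
  "total_mass = (\<Sum>is\<in>idx_lists m n. B is)"

definition min_pos_entry :: real where
  "min_pos_entry = (let P = B ` {is\<in>idx_lists m n. 0 < B is} in if P = {} then 1 else Min P)"

definition harnack_factor :: real where
  "harnack_factor = max 1 (total_mass / min_pos_entry)"

definition harnack_const :: real where
  "harnack_const = harnack_seq harnack_factor (m - 1) n"

lemma total_mass_nonneg: "0 \<le> total_mass"
  unfolding total_mass_def using nonneg by (auto intro: sum_nonneg)

lemma min_pos_entry_pos: "0 < min_pos_entry"
  unfolding min_pos_entry_def Let_def using finite_idx_lists by (auto simp: Min_gr_iff)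

lemma min_pos_entry_le: "is \<in> idx_lists m n \<Longrightarrow> 0 < B is \<Longrightarrow> min_pos_entry \<le> B is"
  unfolding min_pos_entry_def Let_def using finite_idx_lists by (auto intro: Min_le)

lemma harnack_factor_ge_1: "1 \<le> harnack_factor"
  unfolding harnack_factor_def by simp

lemma harnack_const_ge_1: "1 \<le> harnack_const"
  unfolding harnack_const_def by (rule harnack_seq_ge_1[OF harnack_factor_ge_1])

lemma neighbour_le_tapp:
  assumes pos: "\<forall>k<n. 0 < x k" and min: "\<forall>k<n. a \<le> x k" and a: "0 < a"
    and i: "i < n" and edge: "(i, j) \<in> wi_edges m n B"
  shows "min_pos_entry * (x j * a ^ (m - 2)) \<le> tapp m n B x i"
proof -
  obtain is0 where is0: "is0 \<in> idx_lists (m - 1) n" "0 < B (i # is0)" "j \<in> set is0"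
    using edge_imp_pos_entry[OF edge] by blast
  have "\<forall>k\<in>set is0. a \<le> x k"
    using min is0(1) by (auto dest: idx_lists_entry)
  then have "x j * a ^ (length is0 - 1) \<le> prod_list (map x is0)"
    using a is0(3) by (intro prod_list_map_lower_bound) auto
  then have "x j * a ^ (m - 2) \<le> prod_list (map x is0)"
    using idx_lists_length[OF is0(1)] by (simp add: numeral_2_eq_2)
  then have "min_pos_entry * (x j * a ^ (m - 2)) \<le> B (i # is0) * prod_list (map x is0)"
    using min_pos_entry_le[OF Cons_in_idx_lists[OF i is0(1)] is0(2)] min_pos_entry_pos pos a
      edge_less[OF edge]
    by (intro mult_mono) auto
  also have "\<dots> \<le> tapp m n B x i"
    using pos by (intro term_le_tapp[OF nonneg_row[OF i] _ is0(1)]) (simp add: less_imp_le)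
  finally show ?thesis .
qed

lemma harnack_step:
  assumes pos: "\<forall>i<n. 0 < x i"
    and sub: "\<forall>i<n. tapp m n B x i \<le> R * x i ^ (m - 1)" and R_le: "R \<le> total_mass"
    and i0: "i0 < n" and min: "\<forall>j<n. x i0 \<le> x j"
    and c: "1 \<le> c" and i: "i < n" "x i \<le> c * x i0"
    and edge: "(i, j) \<in> wi_edges m n B"
  shows "x j \<le> harnack_factor * c ^ (m - 1) * x i0"
proof -
  define a where "a = x i0"
  have a_pos: "0 < a"
    using pos i0 a_def by auto
  have "min_pos_entry * (x j * a ^ (m - 2)) \<le> tapp m n B x i"
    using neighbour_le_tapp[OF pos _ a_pos i(1) edge] min unfolding a_def by blast
  also have "\<dots> \<le> R * x i ^ (m - 1)"
    using sub i by auto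
  also have "\<dots> \<le> total_mass * (c * a) ^ (m - 1)"
    using R_le i pos total_mass_nonneg
    by (intro mult_mono power_mono) (auto simp: a_def less_imp_le)
  also have "\<dots> = (total_mass * c ^ (m - 1) * a) * a ^ (m - 2)"
  proof -
    have "m - 1 = Suc (m - 2)"
      using order_ge_2 by simp
    then show ?thesis
      by (simp only: power_mult_distrib power_Suc mult_ac)
  qed
  finally have "(min_pos_entry * x j) * a ^ (m - 2) \<le> (total_mass * c ^ (m - 1) * a) * a ^ (m - 2)"
    by (simp only: mult.assoc)
  then have "min_pos_entry * x j \<le> total_mass * c ^ (m - 1) * a"
    using a_pos by (simp add: mult_le_cancel_right)
  then have "x j \<le> (total_mass / min_pos_entry) * c ^ (m - 1) * a"
    using min_pos_entry_pos by (simp add: field_simps)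
  also have "\<dots> \<le> harnack_factor * c ^ (m - 1) * a"
    using a_pos c unfolding harnack_factor_def by (intro mult_right_mono) auto
  finally show ?thesis
    by (simp add: a_def)
qed

text \<open>Weak irreducibility lets the step propagate from a minimum along paths of length \<open>< n\<close>.\<close>

lemma harnack_bound:
  assumes pos: "\<forall>i<n. 0 < x i"
    and sub: "\<forall>i<n. tapp m n B x i \<le> R * x i ^ (m - 1)" and R_le: "R \<le> total_mass"
    and i0: "i0 < n" and min: "\<forall>j<n. x i0 \<le> x j"
  shows "\<forall>j<n. x j \<le> harnack_const * x i0"
proof -
  define c where "c = harnack_seq harnack_factor (m - 1)"
  define S where "S L = {j. j < n \<and> x j \<le> c L * x i0}" for L
  have x0_pos: "0 < x i0"
    using pos i0 by auto
  have c_ge_1: "1 \<le> c L" for L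
    unfolding c_def by (rule harnack_seq_ge_1[OF harnack_factor_ge_1])
  have "S n = {0..<n}"
  proof (rule weakly_irreducible_layers[OF weakly_irr])
    show "i0 \<in> S 0"
      unfolding S_def c_def using i0 by simp
    show "S L \<subseteq> {0..<n}" for L
      unfolding S_def by auto
    show "S L \<subseteq> S (Suc L)" for L
    proof
      fix j
      assume "j \<in> S L"
      moreover have "c L \<le> c (Suc L)"
        unfolding c_def using order_ge_2 by (intro harnack_seq_mono[OF harnack_factor_ge_1]) auto
      then have "c L * x i0 \<le> c (Suc L) * x i0"
        using x0_pos by simp
      ultimately show "j \<in> S (Suc L)"
        unfolding S_def by auto
    qed
    show "j \<in> S (Suc L)" if "i \<in> S L" and edge: "(i, j) \<in> wi_edges m n B" for L i j
    proof -
      have "x j \<le> harnack_factor * c L ^ (m - 1) * x i0"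
        using that(1) by (intro harnack_step[OF pos sub R_le i0 min c_ge_1 _ _ edge]) (auto simp: S_def)
      then show ?thesis
        unfolding S_def c_def using edge_less[OF edge] by simp
    qed
  qed
  then have "j \<in> S n" if "j < n" for j
    using that by simp
  then show ?thesis
    unfolding S_def c_def harnack_const_def by simp
qed

subsection \<open>The Collatz--Wielandt value\<close>

definition cw_box :: "(nat \<Rightarrow> real) set" where
  "cw_box = {x. x \<in> vecs n \<and> (\<forall>i<n. 1 \<le> x i \<and> x i \<le> harnack_const)}"

definition cw_bounds :: "real set" where
  "cw_bounds = {R. 0 \<le> R \<and> (\<exists>x\<in>cw_box. \<forall>i<n. tapp m n B x i \<le> R * x i ^ (m - 1))}"

text \<open>Shown below to be the spectral radius of \<open>B\<close>. By the Harnack bound the restriction to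
  \<open>cw_box\<close> loses nothing, and it makes the infimum attained by compactness.\<close>

definition rho :: real where
  "rho = Inf cw_bounds"

lemma total_mass_in_cw_bounds: "total_mass \<in> cw_bounds"
proof -
  define ones where "ones i = (if i < n then 1 else 0 :: real)" for i
  have "ones \<in> cw_box"
    unfolding cw_box_def vecs_def ones_def using harnack_const_ge_1 by auto
  moreover have "tapp m n B ones i \<le> total_mass * ones i ^ (m - 1)" if i: "i < n" for i
  proof -
    have "tapp m n B ones i = (\<Sum>is\<in>idx_lists (m - 1) n. B (i # is))"
      unfolding tapp_def
    proof (intro sum.cong refl)
      fix "is"
      assume "is \<in> idx_lists (m - 1) n"
      then have "map ones is = map (\<lambda>_. 1) is"
        unfolding ones_def by (auto dest: idx_lists_entry)
      then have "prod_list (map ones is) = 1"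
        by (simp only: prod_list_map_const power_one)
      then show "B (i # is) * prod_list (map ones is) = B (i # is)"
        by simp
    qed
    also have "\<dots> = (\<Sum>l\<in>Cons i ` idx_lists (m - 1) n. B l)"
      by (simp add: sum.reindex)
    also have "\<dots> \<le> total_mass"
      unfolding total_mass_def using finite_idx_lists Cons_in_idx_lists[OF i] nonneg
      by (intro sum_mono2) auto
    finally show ?thesis
      unfolding ones_def using i by simp
  qed
  ultimately show ?thesis
    unfolding cw_bounds_def using total_mass_nonneg by auto
qed

lemma cw_bounds_bdd_below: "bdd_below cw_bounds"
  unfolding cw_bounds_def bdd_below_def by auto

lemma rho_nonneg: "0 \<le> rho"
  unfolding rho_def using total_mass_in_cw_bounds by (intro cInf_greatest) (auto simp: cw_bounds_def)

lemma rho_le_total_mass: "rho \<le> total_mass"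
  unfolding rho_def using total_mass_in_cw_bounds cw_bounds_bdd_below by (rule cInf_lower)

lemma cw_minimizing_seq:
  "\<exists>R x. R \<longlonglongrightarrow> rho \<and> (\<forall>k. x k \<in> cw_box) \<and> (\<forall>k. \<forall>i<n. tapp m n B (x k) i \<le> R k * x k i ^ (m - 1))"
proof -
  have "\<exists>R x. R \<in> cw_bounds \<and> R < rho + inverse (real (Suc k)) \<and> x \<in> cw_box \<and>
      (\<forall>i<n. tapp m n B x i \<le> R * x i ^ (m - 1))" for k
  proof -
    obtain R where "R \<in> cw_bounds" "R < rho + inverse (real (Suc k))"
      using cInf_less_iff[OF _ cw_bounds_bdd_below] total_mass_in_cw_bounds
      unfolding rho_def by (metis empty_iff inverse_positive_iff_positive less_add_same_cancel1 of_nat_0_less_iff zero_less_Suc)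
    then show ?thesis
      unfolding cw_bounds_def by blast
  qed
  then obtain R x where R: "\<And>k. R k \<in> cw_bounds" "\<And>k. R k < rho + inverse (real (Suc k))"
    and x: "\<And>k. x k \<in> cw_box" "\<And>k. \<forall>i<n. tapp m n B (x k) i \<le> R k * x k i ^ (m - 1)"
    by metis
  have R_lim: "R \<longlonglongrightarrow> rho"
  proof (rule tendsto_sandwich[of "\<lambda>_. rho" _ _ "\<lambda>k. rho + inverse (real (Suc k))"])
    show "\<forall>\<^sub>F k in sequentially. rho \<le> R k"
      unfolding rho_def by (intro always_eventually allI cInf_lower[OF R(1) cw_bounds_bdd_below])
    show "\<forall>\<^sub>F k in sequentially. R k \<le> rho + inverse (real (Suc k))"
      using R(2) by (intro always_eventually allI less_imp_le)
    have "(\<lambda>k. rho + inverse (real (Suc k))) \<longlonglongrightarrow> rho + 0"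
      by (intro tendsto_add tendsto_const LIMSEQ_inverse_real_of_nat)
    then show "(\<lambda>k. rho + inverse (real (Suc k))) \<longlonglongrightarrow> rho"
      by simp
  qed simp
  then show ?thesis
    using x by blast
qed

lemma rho_attained: "\<exists>x\<in>cw_box. \<forall>i<n. tapp m n B x i \<le> rho * x i ^ (m - 1)"
proof -
  obtain R x where R_lim: "R \<longlonglongrightarrow> rho" and x: "\<forall>k. x k \<in> cw_box"
    "\<forall>k. \<forall>i<n. tapp m n B (x k) i \<le> R k * x k i ^ (m - 1)"
    using cw_minimizing_seq by blast
  have "\<bar>x k i\<bar> \<le> harnack_const" if "i < n" for k i
  proof -
    have "1 \<le> x k i" "x k i \<le> harnack_const"
      using x(1) that unfolding cw_box_def by auto
    then show ?thesis
      by simp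
  qed
  then obtain \<sigma> l where \<sigma>: "strict_mono \<sigma>" and conv: "\<forall>i<n. (\<lambda>k. x (\<sigma> k) i) \<longlonglongrightarrow> l i"
    using bounded_seq_convergent_subseq_coords[of n x harnack_const] by blast
  define y where "y i = (if i < n then l i else 0)" for i
  have conv_y: "\<forall>i<n. (\<lambda>k. x (\<sigma> k) i) \<longlonglongrightarrow> y i"
    using conv unfolding y_def by auto
  have "1 \<le> y i \<and> y i \<le> harnack_const" if i: "i < n" for i
  proof
    show "1 \<le> y i"
      using conv_y i x(1) unfolding cw_box_def by (intro LIMSEQ_le_const[of "\<lambda>k. x (\<sigma> k) i"]) auto
    show "y i \<le> harnack_const"
      using conv_y i x(1) unfolding cw_box_def by (intro LIMSEQ_le_const2[of "\<lambda>k. x (\<sigma> k) i"]) auto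
  qed
  then have y_box: "y \<in> cw_box"
    unfolding cw_box_def vecs_def y_def by auto
  have "tapp m n B y i \<le> rho * y i ^ (m - 1)" if i: "i < n" for i
  proof (rule LIMSEQ_le)
    show "(\<lambda>k. tapp m n B (x (\<sigma> k)) i) \<longlonglongrightarrow> tapp m n B y i"
      using conv_y by (rule tapp_tendsto)
    have "(\<lambda>k. R (\<sigma> k)) \<longlonglongrightarrow> rho"
      using LIMSEQ_subseq_LIMSEQ[OF R_lim \<sigma>] by (simp add: o_def)
    then show "(\<lambda>k. R (\<sigma> k) * x (\<sigma> k) i ^ (m - 1)) \<longlonglongrightarrow> rho * y i ^ (m - 1)"
      using conv_y i by (intro tendsto_mult tendsto_power) auto
    show "\<exists>N. \<forall>k\<ge>N. tapp m n B (x (\<sigma> k)) i \<le> R (\<sigma> k) * x (\<sigma> k) i ^ (m - 1)"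
      using x(2) i by blast
  qed
  then show ?thesis
    using y_box by blast
qed

lemma rho_le_sub_bound:
  assumes pos: "\<forall>i<n. 0 < x i" and sub: "\<forall>i<n. tapp m n B x i \<le> R * x i ^ (m - 1)"
  shows "rho \<le> R"
proof (cases "total_mass \<le> R")
  case True
  then show ?thesis
    using rho_le_total_mass by simp
next
  case False
  then have R_le: "R \<le> total_mass"
    by simp
  have x_nonneg: "\<forall>i<n. 0 \<le> x i"
    using pos by (simp add: less_imp_le)
  have "0 \<le> R * x 0 ^ (m - 1)"
    using tapp_nonneg[OF nonneg_row x_nonneg] sub dim_pos by (meson order_trans)
  moreover have "0 < x 0 ^ (m - 1)"
    using pos dim_pos by simp
  ultimately have R_nonneg: "0 \<le> R"
    by (metis linorder_not_le mult_neg_pos)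
  obtain i0 where i0: "i0 < n" "\<forall>j<n. x i0 \<le> x j"
    using ex_min_below[OF dim_pos] by blast
  have bound: "\<forall>j<n. x j \<le> harnack_const * x i0"
    using harnack_bound[OF pos sub R_le i0] .
  have x0_pos: "0 < x i0"
    using pos i0 by auto
  define y where "y i = (if i < n then inverse (x i0) * x i else 0)" for i
  have "y \<in> cw_box"
    unfolding cw_box_def vecs_def y_def using i0 bound x0_pos by (auto simp: field_simps)
  moreover have "tapp m n B y i \<le> R * y i ^ (m - 1)" if i: "i < n" for i
  proof -
    have "tapp m n B y i = inverse (x i0) ^ (m - 1) * tapp m n B x i"
      by (simp add: y_def tapp_cong[of n y "\<lambda>i. inverse (x i0) * x i"] tapp_scale)
    also have "\<dots> \<le> inverse (x i0) ^ (m - 1) * (R * x i ^ (m - 1))"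
      using sub i x0_pos by (intro mult_left_mono) auto
    also have "\<dots> = R * y i ^ (m - 1)"
      using i unfolding y_def by (simp add: power_mult_distrib)
    finally show ?thesis .
  qed
  ultimately have "R \<in> cw_bounds"
    unfolding cw_bounds_def using R_nonneg by auto
  then show ?thesis
    unfolding rho_def using cw_bounds_bdd_below by (rule cInf_lower)
qed

definition cw_sub :: "(nat \<Rightarrow> real) set" where
  "cw_sub = {x. x \<in> vecs n \<and> (\<forall>i<n. 0 < x i) \<and> (\<forall>i<n. tapp m n B x i \<le> rho * x i ^ (m - 1))}"

definition strict_rows :: "(nat \<Rightarrow> real) \<Rightarrow> nat set" where
  "strict_rows x = {i. i < n \<and> tapp m n B x i < rho * x i ^ (m - 1)}"

lemma strict_rows_subset: "strict_rows x \<subseteq> {0..<n}"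
  unfolding strict_rows_def by auto

lemma finite_strict_rows: "finite (strict_rows x)"
  using strict_rows_subset finite_subset by blast

lemma strict_rows_not_all:
  assumes "x \<in> cw_sub"
  shows "strict_rows x \<noteq> {0..<n}"
proof
  assume all: "strict_rows x = {0..<n}"
  have pos: "\<forall>i<n. 0 < x i"
    using assms unfolding cw_sub_def by simp
  define ratio where "ratio i = tapp m n B x i / x i ^ (m - 1)" for i
  define R where "R = Max (ratio ` {0..<n})"
  have fin: "finite (ratio ` {0..<n})" "ratio ` {0..<n} \<noteq> {}"
    using dim_pos by auto
  have "ratio i < rho" if "i < n" for i
    using all that pos unfolding strict_rows_def ratio_def by (auto simp: pos_divide_less_eq)
  then have "R < rho"
    unfolding R_def Max_less_iff[OF fin] by auto
  moreover have "tapp m n B x i \<le> R * x i ^ (m - 1)" if "i < n" for i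
  proof -
    have "ratio i \<le> R"
      unfolding R_def using fin that by (intro Max_ge) auto
    then show ?thesis
      using that pos unfolding ratio_def by (simp add: pos_divide_le_eq)
  qed
  ultimately show False
    using rho_le_sub_bound[OF pos] by (meson not_le)
qed

lemma strict_rows_uniform_gap:
  assumes x: "x \<in> cw_sub" and ne: "strict_rows x \<noteq> {}"
  obtains q where "0 \<le> q" and "q < 1"
    and "\<forall>i\<in>strict_rows x. 0 < rho * x i ^ (m - 1) \<and> tapp m n B x i \<le> q * (rho * x i ^ (m - 1))"
proof -
  define T where "T = strict_rows x"
  have x_nonneg: "\<forall>i<n. 0 \<le> x i"
    using x unfolding cw_sub_def by (auto simp: less_imp_le)
  have T_row: "i < n" "tapp m n B x i < rho * x i ^ (m - 1)" if "i \<in> T" for i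
    using that unfolding T_def strict_rows_def by auto
  have row_nonneg: "0 \<le> tapp m n B x i" if "i \<in> T" for i
    using tapp_nonneg[OF nonneg_row[OF T_row(1)[OF that]] x_nonneg] .
  have denom_pos: "0 < rho * x i ^ (m - 1)" if "i \<in> T" for i
    using T_row[OF that] row_nonneg[OF that] by linarith
  define ratio where "ratio i = tapp m n B x i / (rho * x i ^ (m - 1))" for i
  define q where "q = Max (ratio ` T)"
  have fin: "finite (ratio ` T)" "ratio ` T \<noteq> {}"
    using finite_strict_rows ne unfolding T_def by auto
  have "q < 1"
    unfolding q_def Max_less_iff[OF fin] using T_row denom_pos
    by (auto simp: ratio_def pos_divide_less_eq)
  moreover have "0 \<le> q"
  proof -
    obtain i where "i \<in> T"
      using ne unfolding T_def by blast
    then show ?thesis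
      using Max_ge[OF fin(1), of "ratio i"] row_nonneg denom_pos
      unfolding q_def ratio_def by (meson divide_nonneg_pos order_trans image_eqI)
  qed
  moreover have "tapp m n B x i \<le> q * (rho * x i ^ (m - 1))" if "i \<in> T" for i
    using Max_ge[OF fin(1), of "ratio i"] denom_pos[OF that] that
    unfolding q_def ratio_def by (simp add: pos_divide_le_eq)
  ultimately show ?thesis
    using that denom_pos unfolding T_def by blast
qed

lemma strict_rows_shrink:
  assumes x: "x \<in> cw_sub" and ne: "strict_rows x \<noteq> {}"
  obtains t where "0 < t" and "t < 1"
    and "\<forall>i\<in>strict_rows x. tapp m n B (\<lambda>i. if i \<in> strict_rows x then t * x i else x i) i
           < rho * (t * x i) ^ (m - 1)"
proof -
  define T where "T = strict_rows x"
  obtain q where q: "0 \<le> q" "q < 1"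
    and gap: "\<forall>i\<in>T. 0 < rho * x i ^ (m - 1) \<and> tapp m n B x i \<le> q * (rho * x i ^ (m - 1))"
    using strict_rows_uniform_gap[OF x ne] unfolding T_def by blast
  have pos: "\<forall>i<n. 0 < x i"
    using x unfolding cw_sub_def by simp
  have m1_pos: "0 < m - 1"
    using order_ge_2 by simp
  define t where "t = root (m - 1) ((1 + q) / 2)"
  have t_pow: "t ^ (m - 1) = (1 + q) / 2"
    unfolding t_def using real_root_pow_pos2[OF m1_pos] q by simp
  have t_pos: "0 < t"
    unfolding t_def using q m1_pos by (simp add: real_root_gt_zero)
  have t_lt_1: "t < 1"
    unfolding t_def using real_root_lt_1_iff[OF m1_pos] q by simp
  define x' where "x' i = (if i \<in> T then t * x i else x i)" for i
  have "tapp m n B x' i < rho * (t * x i) ^ (m - 1)" if i: "i \<in> T" for i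
  proof -
    have "\<forall>k<n. 0 \<le> x' k \<and> x' k \<le> x k"
      using pos t_pos t_lt_1 unfolding x'_def by (auto simp: less_imp_le mult_le_cancel_right1)
    moreover have "i < n"
      using i unfolding T_def strict_rows_def by simp
    ultimately have "tapp m n B x' i \<le> tapp m n B x i"
      using tapp_mono[OF nonneg_row] by blast
    also have "\<dots> \<le> q * (rho * x i ^ (m - 1))"
      using gap i by blast
    also have "\<dots> < ((1 + q) / 2) * (rho * x i ^ (m - 1))"
      using q gap i by (intro mult_strict_right_mono) auto
    also have "\<dots> = rho * (t * x i) ^ (m - 1)"
      using t_pow by (simp add: power_mult_distrib ac_simps)
    finally show ?thesis .
  qed
  then show ?thesis
    using that t_pos t_lt_1 unfolding x'_def T_def by blast
qed

text \<open>Shrinking the strict rows makes some row adjacent to them strict as well.\<close>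

lemma strict_rows_grow:
  assumes x: "x \<in> cw_sub" and ne: "strict_rows x \<noteq> {}" and not_all: "strict_rows x \<noteq> {0..<n}"
  shows "\<exists>x'\<in>cw_sub. card (strict_rows x) < card (strict_rows x')"
proof -
  define T where "T = strict_rows x"
  obtain t where t: "0 < t" "t < 1"
    and shrunk: "\<forall>i\<in>T. tapp m n B (\<lambda>i. if i \<in> T then t * x i else x i) i < rho * (t * x i) ^ (m - 1)"
    using strict_rows_shrink[OF x ne] unfolding T_def by blast
  define x' where "x' i = (if i \<in> T then t * x i else x i)" for i
  have pos: "\<forall>i<n. 0 < x i" and sub: "\<forall>i<n. tapp m n B x i \<le> rho * x i ^ (m - 1)"
    and x_vec: "x \<in> vecs n"
    using x unfolding cw_sub_def by auto
  have x'_pos: "\<forall>i<n. 0 < x' i"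
    using pos t unfolding x'_def by auto
  have x'_le: "\<forall>i<n. 0 < x' i \<and> x' i \<le> x i"
    using x'_pos pos t unfolding x'_def by (auto simp: less_imp_le mult_le_cancel_right1)
  have x'_vec: "x' \<in> vecs n"
    using x_vec strict_rows_subset unfolding vecs_def x'_def T_def by auto
  have row_le: "tapp m n B x' i \<le> tapp m n B x i" if "i < n" for i
    using tapp_mono[OF nonneg_row[OF that]] x'_le by (simp add: less_imp_le)
  have strict_T: "tapp m n B x' i < rho * x' i ^ (m - 1)" if "i \<in> T" for i
    using shrunk that unfolding x'_def by simp
  have "tapp m n B x' i \<le> rho * x' i ^ (m - 1)" if "i < n" for i
  proof (cases "i \<in> T")
    case False
    then show ?thesis
      using row_le[OF that] sub that unfolding x'_def by fastforce
  qed (use strict_T in \<open>simp add: less_imp_le\<close>)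
  then have x'_sub: "x' \<in> cw_sub"
    unfolding cw_sub_def using x'_vec x'_pos by blast
  have T_sub: "T \<subseteq> strict_rows x'"
    using strict_T strict_rows_subset unfolding strict_rows_def T_def by auto
  have "{0..<n} - T \<noteq> {}" "{0..<n} - T \<noteq> {0..<n}"
    using not_all ne strict_rows_subset unfolding T_def by auto
  then obtain j k where j: "j \<in> {0..<n} - T" and edge: "(j, k) \<in> wi_edges m n B"
    and k: "k \<notin> {0..<n} - T"
    using weakly_irreducible_exit_edge[OF weakly_irr, of "{0..<n} - T"] by blast
  have k_T: "k \<in> T"
    using k edge_less[OF edge] by simp
  obtain is0 where is0: "is0 \<in> idx_lists (m - 1) n" "0 < B (j # is0)" "k \<in> set is0"
    using edge_imp_pos_entry[OF edge] by blast
  have "x' k < x k"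
    using k_T t pos edge_less[OF edge] unfolding x'_def by simp
  then have "tapp m n B x' j < tapp m n B x j"
    using tapp_strict_mono[OF nonneg_row x'_le is0] j by simp
  also have "\<dots> \<le> rho * x' j ^ (m - 1)"
    using sub j unfolding x'_def by simp
  finally have "j \<in> strict_rows x'"
    using j unfolding strict_rows_def by simp
  then have "T \<subset> strict_rows x'"
    using T_sub j by auto
  then have "card T < card (strict_rows x')"
    using finite_strict_rows by (intro psubset_card_mono)
  then show ?thesis
    using x'_sub unfolding T_def by blast
qed

lemma perron_eigenvector_exists:
  "\<exists>v. v \<in> vecs n \<and> (\<forall>i<n. 0 < v i) \<and> v 0 = 1 \<and> (\<forall>i<n. tapp m n B v i = rho * v i ^ (m - 1))"
proof -
  obtain x0 where "x0 \<in> cw_box" "\<forall>i<n. tapp m n B x0 i \<le> rho * x0 i ^ (m - 1)"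
    using rho_attained by blast
  then have x0: "x0 \<in> cw_sub"
    unfolding cw_sub_def cw_box_def by fastforce
  have "card (strict_rows y) < Suc n" for y
    using card_mono[OF _ strict_rows_subset, of y] by simp
  then obtain x where x: "x \<in> cw_sub" and x_max: "\<forall>y\<in>cw_sub. card (strict_rows y) \<le> card (strict_rows x)"
    using ex_has_greatest_nat[of "\<lambda>y. y \<in> cw_sub" x0 "\<lambda>y. card (strict_rows y)" "Suc n"] x0 by blast
  have pos: "\<forall>i<n. 0 < x i" and sub: "\<forall>i<n. tapp m n B x i \<le> rho * x i ^ (m - 1)"
    using x unfolding cw_sub_def by auto
  have "strict_rows x = {}"
    using strict_rows_grow[OF x _ strict_rows_not_all[OF x]] x_max by fastforce
  then have eig: "tapp m n B x i = rho * x i ^ (m - 1)" if "i < n" for i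
    using sub that unfolding strict_rows_def by fastforce
  define v where "v i = (if i < n then inverse (x 0) * x i else 0)" for i
  have x0_pos: "0 < x 0"
    using pos dim_pos by simp
  have "tapp m n B v i = rho * v i ^ (m - 1)" if i: "i < n" for i
  proof -
    have "tapp m n B v i = inverse (x 0) ^ (m - 1) * tapp m n B x i"
      by (simp add: v_def tapp_cong[of n v "\<lambda>i. inverse (x 0) * x i"] tapp_scale)
    then show ?thesis
      using eig[OF i] i unfolding v_def by (simp add: power_mult_distrib)
  qed
  moreover have "v \<in> vecs n" "\<forall>i<n. 0 < v i" "v 0 = 1"
    unfolding v_def vecs_def using pos x0_pos dim_pos by auto
  ultimately show ?thesis
    by blast
qed

abbreviation cB :: "nat list \<Rightarrow> complex" where
  "cB is \<equiv> complex_of_real (B is)"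

lemma norm_eigenvalue_le_rho:
  assumes v: "\<forall>i<n. 0 < v i" "\<forall>i<n. tapp m n B v i = rho * v i ^ (m - 1)"
    and y: "\<exists>i<n. y i \<noteq> 0" "\<forall>i<n. tapp m n cB y i = lam * y i ^ (m - 1)"
  shows "cmod lam \<le> rho"
proof -
  obtain i0 where i0: "i0 < n" "\<forall>j<n. cmod (y j) / v j \<le> cmod (y i0) / v i0"
    using ex_max_below[OF dim_pos, of "\<lambda>j. cmod (y j) / v j"] by blast
  define t where "t = cmod (y i0) / v i0"
  obtain i1 where i1: "i1 < n" "y i1 \<noteq> 0"
    using y(1) by blast
  have "0 < cmod (y i1) / v i1"
    using i1 v(1) by simp
  then have t_pos: "0 < t"
    using i0(2) i1(1) unfolding t_def by (meson less_le_trans)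
  have y_le: "\<forall>j<n. 0 \<le> cmod (y j) \<and> cmod (y j) \<le> t * v j"
    using i0(2) v(1) unfolding t_def by (auto simp: pos_divide_le_eq)
  have "0 < v i0"
    using v(1) i0(1) by simp
  then have y_i0: "cmod (y i0) = t * v i0"
    unfolding t_def by simp
  have "cmod lam * cmod (y i0) ^ (m - 1) = cmod (tapp m n cB y i0)"
    using y(2) i0(1) by (simp add: norm_mult norm_power)
  also have "\<dots> \<le> tapp m n B (\<lambda>i. cmod (y i)) i0"
    by (rule norm_tapp_le[OF nonneg_row[OF i0(1)]])
  also have "\<dots> \<le> tapp m n B (\<lambda>i. t * v i) i0"
    by (rule tapp_mono[OF nonneg_row[OF i0(1)] y_le])
  also have "\<dots> = rho * cmod (y i0) ^ (m - 1)"
    using v(2) i0(1) y_i0 by (simp add: tapp_scale power_mult_distrib)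
  finally have "cmod lam * cmod (y i0) ^ (m - 1) \<le> rho * cmod (y i0) ^ (m - 1)" .
  moreover have "0 < cmod (y i0) ^ (m - 1)"
    using y_i0 t_pos v(1) i0(1) by simp
  ultimately show ?thesis
    by simp
qed

lemma spectral_radius_eq: "spectral_radius m n B = rho"
proof -
  obtain v where v: "v \<in> vecs n" "\<forall>i<n. 0 < v i" "v 0 = 1" "\<forall>i<n. tapp m n B v i = rho * v i ^ (m - 1)"
    using perron_eigenvector_exists by blast
  have "is_eigpair m n B (complex_of_real rho) (\<lambda>i. complex_of_real (v i))"
    unfolding is_eigpair_def using v dim_pos by (auto simp: vecs_def tapp_of_real intro!: exI[of _ 0])
  then have "rho \<in> {cmod lam |lam. eigenvalue m n B lam}"
    unfolding eigenvalue_def using rho_nonneg by (intro CollectI exI[of _ "complex_of_real rho"]) auto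
  moreover have "r \<le> rho" if "r \<in> {cmod lam |lam. eigenvalue m n B lam}" for r
    using that norm_eigenvalue_le_rho[OF v(2,4)] unfolding eigenvalue_def is_eigpair_def by auto
  ultimately show ?thesis
    unfolding spectral_radius_def by (rule cSup_eq_maximum)
qed

abbreviation pv :: "nat \<Rightarrow> real" where
  "pv \<equiv> perron_vec m n B"

lemma perron_vec_props:
  "pv \<in> vecs n" "\<forall>i<n. 0 < pv i" "pv 0 = 1" "\<forall>i<n. tapp m n B pv i = rho * pv i ^ (m - 1)"
proof -
  define P where "P v \<longleftrightarrow> v \<in> vecs n \<and> (\<forall>i<n. 0 < v i) \<and> v 0 = 1 \<and>
      (\<forall>i<n. tapp m n B v i = rho * v i ^ (m - 1))" for v
  have "P (SOME v. P v)"
    using perron_eigenvector_exists unfolding P_def by (rule someI_ex)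
  moreover have "pv = (SOME v. P v)"
    unfolding perron_vec_def spectral_radius_eq P_def ..
  ultimately show "pv \<in> vecs n" "\<forall>i<n. 0 < pv i" "pv 0 = 1" "\<forall>i<n. tapp m n B pv i = rho * pv i ^ (m - 1)"
    unfolding P_def by auto
qed

lemma H_eigenvalue_rho: "H_eigenvalue m n B rho"
  unfolding H_eigenvalue_def using perron_vec_props dim_pos by (intro exI[of _ pv]) auto

lemma H_eigenvalue_le_rho:
  assumes "H_eigenvalue m n B mu"
  shows "mu \<le> rho"
proof -
  obtain x where x: "\<exists>i<n. x i \<noteq> 0" "\<forall>i<n. tapp m n B x i = mu * x i ^ (m - 1)"
    using assms unfolding H_eigenvalue_def by blast
  have "cmod (complex_of_real mu) \<le> rho"
    using x by (intro norm_eigenvalue_le_rho[OF perron_vec_props(2,4), of "\<lambda>i. complex_of_real (x i)"])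
      (auto simp: tapp_of_real)
  then show ?thesis
    by simp
qed

lemma rho_pos_of_pos_entry:
  assumes i: "i < n" and "is": "is \<in> idx_lists (m - 1) n" and pos: "0 < B (i # is)"
  shows "0 < rho"
proof -
  have "0 < B (i # is) * prod_list (map pv is)"
    using pos perron_vec_props(2) "is" by (intro mult_pos_pos prod_list_map_pos) (auto dest: idx_lists_entry)
  also have "\<dots> \<le> tapp m n B pv i"
    using perron_vec_props(2) by (intro term_le_tapp[OF nonneg_row[OF i] _ "is"]) (simp add: less_imp_le)
  also have "\<dots> = rho * pv i ^ (m - 1)"
    using perron_vec_props(4) i by simp
  finally have "0 < rho * pv i ^ (m - 1)" .
  moreover have "0 < pv i ^ (m - 1)"
    using perron_vec_props(2) i by simp
  ultimately show ?thesis
    by (rule zero_less_mult_pos2)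
qed

lemma eigvec_abs_propagate:
  assumes y: "is_eigpair m n B (complex_of_real rho) y" and t: "0 < t"
    and le: "\<forall>k<n. cmod (y k) \<le> t * pv k"
    and i: "i < n" "cmod (y i) = t * pv i" and edge: "(i, j) \<in> wi_edges m n B"
  shows "cmod (y j) = t * pv j"
proof -
  obtain is0 where is0: "is0 \<in> idx_lists (m - 1) n" "0 < B (i # is0)" "j \<in> set is0"
    using edge_imp_pos_entry[OF edge] by blast
  have le': "\<forall>k<n. 0 \<le> cmod (y k) \<and> cmod (y k) \<le> t * pv k"
    using le by simp
  have "tapp m n B (\<lambda>k. t * pv k) i = rho * cmod (y i) ^ (m - 1)"
    using perron_vec_props(4) i by (simp add: tapp_scale power_mult_distrib)
  also have "\<dots> = cmod (tapp m n cB y i)"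
    using y i rho_nonneg unfolding is_eigpair_def by (simp add: norm_mult norm_power)
  also have "\<dots> \<le> tapp m n B (\<lambda>k. cmod (y k)) i"
    by (rule norm_tapp_le[OF nonneg_row[OF i(1)]])
  finally have "tapp m n B (\<lambda>k. cmod (y k)) i = tapp m n B (\<lambda>k. t * pv k) i"
    using tapp_mono[OF nonneg_row[OF i(1)] le'] by (rule antisym[rotated])
  then have "B (i # is0) * prod_list (map (\<lambda>k. cmod (y k)) is0) = B (i # is0) * prod_list (map (\<lambda>k. t * pv k) is0)"
    unfolding tapp_def
  proof (rule sum_mono_inv[OF _ _ is0(1) finite_idx_lists])
    fix "is"
    assume "is" : "is \<in> idx_lists (m - 1) n"
    then have "prod_list (map (\<lambda>k. cmod (y k)) is) \<le> prod_list (map (\<lambda>k. t * pv k) is)"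
      using le' by (intro prod_list_map_mono) (auto dest: idx_lists_entry)
    then show "B (i # is) * prod_list (map (\<lambda>k. cmod (y k)) is) \<le> B (i # is) * prod_list (map (\<lambda>k. t * pv k) is)"
      using nonneg_row[OF i(1)] "is" by (simp add: mult_left_mono)
  qed
  then have "prod_list (map (\<lambda>k. cmod (y k)) is0) = prod_list (map (\<lambda>k. t * pv k) is0)"
    using is0(2) by simp
  moreover have "\<forall>k\<in>set is0. 0 \<le> cmod (y k) \<and> cmod (y k) \<le> t * pv k \<and> 0 < t * pv k"
    using le' t perron_vec_props(2) is0(1) by (auto dest: idx_lists_entry)
  ultimately show ?thesis
    using prod_list_map_eq_imp_eq[of is0 "\<lambda>k. cmod (y k)" "\<lambda>k. t * pv k" j] is0(3) by blast
qed

lemma eigvec_abs: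
  assumes y: "is_eigpair m n B (complex_of_real rho) y"
  shows "\<exists>t>0. \<forall>i<n. cmod (y i) = t * pv i"
proof -
  obtain i0 where i0: "i0 < n" "\<forall>j<n. cmod (y j) / pv j \<le> cmod (y i0) / pv i0"
    using ex_max_below[OF dim_pos, of "\<lambda>j. cmod (y j) / pv j"] by blast
  define t where "t = cmod (y i0) / pv i0"
  obtain i1 where i1: "i1 < n" "y i1 \<noteq> 0"
    using y unfolding is_eigpair_def by blast
  have "0 < cmod (y i1) / pv i1"
    using i1 perron_vec_props(2) by simp
  then have t_pos: "0 < t"
    using i0(2) i1(1) unfolding t_def by (meson less_le_trans)
  have le: "\<forall>k<n. cmod (y k) \<le> t * pv k"
    using i0(2) perron_vec_props(2) unfolding t_def by (auto simp: pos_divide_le_eq)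
  have "0 < pv i0"
    using perron_vec_props(2) i0(1) by simp
  then have "cmod (y i0) = t * pv i0"
    unfolding t_def by simp
  then have "cmod (y j) = t * pv j" if "j < n" for j
    by (rule weakly_irreducible_propagate[OF weakly_irr i0(1), of "\<lambda>i. cmod (y i) = t * pv i"])
      (use eigvec_abs_propagate[OF y t_pos le] edge_less that in blast)+
  then show ?thesis
    using t_pos by blast
qed

lemma eigvec_nonzero:
  assumes "is_eigpair m n B (complex_of_real rho) y" and "i < n"
  shows "y i \<noteq> 0"
  using eigvec_abs[OF assms(1)] perron_vec_props(2) assms(2) by force

text \<open>On every positive entry of \<open>B\<close> the equation \<open>B y^{m-1} = rho y^{[m-1]}\<close> is an equality case
  of the triangle inequality, which aligns the phases of \<open>y\<close>.\<close>

lemma eigvec_sign_condition: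
  assumes y: "is_eigpair m n B (complex_of_real rho) y" and l: "l \<in> idx_lists m n" and "B l \<noteq> 0"
  shows "prod_list (map (\<lambda>i. sgn (y i)) (tl l)) = sgn (y (hd l)) ^ (m - 1)"
proof -
  obtain i is0 where l_eq: "l = i # is0"
    using l order_ge_2 unfolding idx_lists_def by (cases l) auto
  have i: "i < n" and is0: "is0 \<in> idx_lists (m - 1) n"
    using l order_ge_2 unfolding l_eq idx_lists_def by auto
  have "0 \<le> B l"
    using nonneg l by blast
  then have B_pos: "0 < B (i # is0)"
    using \<open>B l \<noteq> 0\<close> unfolding l_eq by simp
  obtain t where t: "0 < t" "\<forall>k<n. cmod (y k) = t * pv k"
    using eigvec_abs[OF y] by blast
  define z where "z is = cB (i # is) * prod_list (map y is)" for "is"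
  have norm_z: "cmod (z is) = B (i # is) * prod_list (map (\<lambda>k. cmod (y k)) is)"
    if "is \<in> idx_lists (m - 1) n" for "is"
    using nonneg_row[OF i] that unfolding z_def by (simp add: norm_mult norm_prod_list_map)
  have sum_z: "sum z (idx_lists (m - 1) n) = complex_of_real rho * y i ^ (m - 1)"
    using y i unfolding is_eigpair_def z_def tapp_def by simp
  have rho_pos: "0 < rho"
    by (rule rho_pos_of_pos_entry[OF i is0 B_pos])
  have "(\<Sum>is\<in>idx_lists (m - 1) n. cmod (z is)) = tapp m n B (\<lambda>k. cmod (y k)) i"
    unfolding tapp_def using norm_z by simp
  also have "\<dots> = tapp m n B (\<lambda>k. t * pv k) i"
    using t(2) by (intro tapp_cong) simp
  also have "\<dots> = rho * cmod (y i) ^ (m - 1)"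
    using perron_vec_props(4) i t(2) by (simp add: tapp_scale power_mult_distrib)
  also have "\<dots> = cmod (sum z (idx_lists (m - 1) n))"
    unfolding sum_z using rho_pos by (simp add: norm_mult norm_power)
  finally have "z is0 = complex_of_real (cmod (z is0)) * sgn (sum z (idx_lists (m - 1) n))"
    using norm_sum_eq_imp_common_phase[OF finite_idx_lists _ is0] by simp
  moreover have "0 < cmod (z is0)"
    using norm_z[OF is0] B_pos eigvec_nonzero[OF y] is0
    by (simp add: prod_list_map_pos idx_lists_entry)
  ultimately have "sgn (z is0) = sgn (sum z (idx_lists (m - 1) n))"
    by (metis sgn_of_real_pos_mult sgn_sgn)
  also have "\<dots> = sgn (y i) ^ (m - 1)"
    unfolding sum_z using rho_pos by (simp add: sgn_of_real_pos_mult sgn_power_complex)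
  finally show ?thesis
    unfolding l_eq using B_pos by (simp add: z_def sgn_of_real_pos_mult sgn_prod_list_map)
qed

text \<open>\<open>sign_diag y\<close> is the diagonal of \<open>D\<^sub>y\<close> and \<open>eigvec_of d\<close> is \<open>D v\<^sub>p\<close> for \<open>D = diag d\<close>;
  outside \<open>[n]\<close> they follow the conventions of \<open>D0\<close> and \<open>vecs\<close>.\<close>

definition sign_diag :: "(nat \<Rightarrow> complex) \<Rightarrow> nat \<Rightarrow> complex" where
  "sign_diag y = (\<lambda>i. if i < n then sgn (y i) else 1)"

definition eigvec_of :: "(nat \<Rightarrow> complex) \<Rightarrow> nat \<Rightarrow> complex" where
  "eigvec_of d = (\<lambda>i. if i < n then d i * complex_of_real (pv i) else 0)"

lemma D0_entry_rel:
  assumes "d \<in> D0 m n B" and "i < n" and "is \<in> idx_lists (m - 1) n" and "B (i # is) \<noteq> 0"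
  shows "prod_list (map d is) = d i ^ (m - 1)"
proof -
  have "B (i # is) = 0 \<or> prod_list (map d (tl (i # is))) = d (hd (i # is)) ^ (m - 1)"
    using assms(1) Cons_in_idx_lists[OF assms(2,3)] unfolding D0_iff[OF order_pos] by blast
  then show ?thesis
    using assms(4) by simp
qed

lemma D0_unimodular:
  assumes d: "d \<in> D0 m n B" and i: "i < n"
  shows "cmod (d i) = 1"
proof -
  obtain i0 where i0: "i0 < n" "\<forall>j<n. cmod (d j) \<le> cmod (d i0)"
    using ex_max_below[OF dim_pos, of "\<lambda>j. cmod (d j)"] by blast
  have "1 \<le> cmod (d i0)"
    using i0(2) dim_pos D0_first[OF d] by (metis norm_one)
  then have max_pos: "0 < cmod (d i0)"
    by linarith
  have "cmod (d j) = cmod (d i0)" if "j < n" for j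
  proof (rule weakly_irreducible_propagate[OF weakly_irr i0(1), of "\<lambda>i. cmod (d i) = cmod (d i0)"])
    fix i j
    assume i: "cmod (d i) = cmod (d i0)" and edge: "(i, j) \<in> wi_edges m n B"
    obtain "is" where "is": "is \<in> idx_lists (m - 1) n" "0 < B (i # is)" "j \<in> set is"
      using edge_imp_pos_entry[OF edge] by blast
    have "prod_list (map d is) = d i ^ (m - 1)"
      using D0_entry_rel[OF d _ "is"(1)] edge_less[OF edge] "is"(2) by simp
    then have "prod_list (map (\<lambda>k. cmod (d k)) is) = cmod (d i) ^ (m - 1)"
      by (metis norm_prod_list_map norm_power)
    also have "\<dots> = prod_list (map (\<lambda>k. cmod (d i0)) is)"
      using i idx_lists_length[OF "is"(1)] by (simp add: prod_list_map_const)
    finally show "cmod (d j) = cmod (d i0)"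
      using prod_list_map_eq_imp_eq[of "is" "\<lambda>k. cmod (d k)" "\<lambda>k. cmod (d i0)" j] "is" i0(2) max_pos
      by (auto dest: idx_lists_entry)
  qed (use that in simp_all)
  from this[of 0] this[of i] show ?thesis
    using dim_pos i D0_first[OF d] by simp
qed

lemma eigvec_of_D0:
  assumes d: "d \<in> D0 m n B"
  shows "is_eigpair m n B (complex_of_real rho) (eigvec_of d)"
  unfolding is_eigpair_def
proof (intro conjI)
  show "eigvec_of d \<in> vecs n"
    unfolding eigvec_of_def vecs_def by simp
  show "\<exists>i<n. eigvec_of d i \<noteq> 0"
    using dim_pos perron_vec_props(3) D0_first[OF d] unfolding eigvec_of_def by (intro exI[of _ 0]) simp
  show "\<forall>i<n. tapp m n cB (eigvec_of d) i = complex_of_real rho * eigvec_of d i ^ (m - 1)"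
  proof (intro allI impI)
    fix i
    assume i: "i < n"
    have "tapp m n cB (eigvec_of d) i = tapp m n cB (\<lambda>k. d k * complex_of_real (pv k)) i"
      unfolding eigvec_of_def by (intro tapp_cong) simp
    also have "\<dots> = d i ^ (m - 1) * tapp m n cB (\<lambda>k. complex_of_real (pv k)) i"
      unfolding tapp_def sum_distrib_left
    proof (intro sum.cong refl)
      fix "is"
      assume "is \<in> idx_lists (m - 1) n"
      then show "cB (i # is) * prod_list (map (\<lambda>k. d k * complex_of_real (pv k)) is)
          = d i ^ (m - 1) * (cB (i # is) * prod_list (map (\<lambda>k. complex_of_real (pv k)) is))"
        using D0_entry_rel[OF d i] by (cases "B (i # is) = 0") (simp_all add: prod_list_map_mult mult_ac)
    qed
    also have "\<dots> = complex_of_real rho * eigvec_of d i ^ (m - 1)"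
      using perron_vec_props(4) i unfolding eigvec_of_def by (simp add: tapp_of_real power_mult_distrib mult_ac)
    finally show "tapp m n cB (eigvec_of d) i = complex_of_real rho * eigvec_of d i ^ (m - 1)" .
  qed
qed

lemma sign_diag_eigvec_of:
  assumes d: "d \<in> D0 m n B"
  shows "sign_diag (eigvec_of d) = d"
proof
  fix i
  show "sign_diag (eigvec_of d) i = d i"
  proof (cases "i < n")
    case True
    have "sgn (d i * complex_of_real (pv i)) = sgn (d i)"
      using sgn_of_real_pos_mult[of "pv i" "d i"] perron_vec_props(2) True by (simp add: mult.commute)
    also have "\<dots> = d i"
      using D0_unimodular[OF d True] by (simp add: sgn_div_norm)
    finally show ?thesis
      unfolding sign_diag_def eigvec_of_def using True by simp
  qed (simp add: sign_diag_def D0_outside[OF d])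
qed

lemma eigvec_abs_normalized:
  assumes y: "is_eigpair m n B (complex_of_real rho) y" and y0: "y 0 = 1" and i: "i < n"
  shows "cmod (y i) = pv i"
proof -
  obtain t where t: "\<forall>i<n. cmod (y i) = t * pv i"
    using eigvec_abs[OF y] by blast
  have "t = 1"
    using t[rule_format, OF dim_pos] y0 perron_vec_props(3) by simp
  then show ?thesis
    using t i by simp
qed

lemma sign_diag_D0:
  assumes y: "is_eigpair m n B (complex_of_real rho) y" and y0: "y 0 = 1"
  shows "sign_diag y \<in> D0 m n B"
proof -
  have prod: "prod_list (map (sign_diag y) (tl l)) = sign_diag y (hd l) ^ (m - 1)"
    if l: "l \<in> idx_lists m n" and "B l \<noteq> 0" for l
  proof -
    have "set (tl l) \<subseteq> set l"
      by (cases l) auto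
    then have "set (tl l) \<subseteq> {0..<n}" "hd l < n"
      using l hd_in_idx_lists[OF order_pos l] unfolding idx_lists_def by auto
    then have map_eq: "map (sign_diag y) (tl l) = map (\<lambda>i. sgn (y i)) (tl l)"
      and hd_eq: "sign_diag y (hd l) = sgn (y (hd l))"
      unfolding sign_diag_def by auto
    have "prod_list (map (sign_diag y) (tl l)) = prod_list (map (\<lambda>i. sgn (y i)) (tl l))"
      by (simp only: map_eq)
    also have "\<dots> = sgn (y (hd l)) ^ (m - 1)"
      by (rule eigvec_sign_condition[OF y that])
    finally show ?thesis
      by (simp only: hd_eq)
  qed
  show ?thesis
    unfolding D0_iff[OF order_pos]
  proof (intro conjI allI impI ballI)
    show "sign_diag y i \<noteq> 0" if "i < n" for i
      using eigvec_nonzero[OF y that] that unfolding sign_diag_def by (simp add: sgn_zero_iff)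
    show "sign_diag y i = 1" if "n \<le> i" for i
      using that unfolding sign_diag_def by simp
    show "sign_diag y 0 = 1"
      using y0 dim_pos unfolding sign_diag_def by simp
    show "B l = 0 \<or> prod_list (map (sign_diag y) (tl l)) = sign_diag y (hd l) ^ (m - 1)"
      if "l \<in> idx_lists m n" for l
      using prod[OF that] by blast
  qed
qed

lemma eigvec_eq_eigvec_of_sign_diag:
  assumes y: "is_eigpair m n B (complex_of_real rho) y" and y0: "y 0 = 1"
  shows "y = eigvec_of (sign_diag y)"
proof
  fix i
  show "y i = eigvec_of (sign_diag y) i"
  proof (cases "i < n")
    case True
    then show ?thesis
      using complex_polar_sgn[of "y i"] eigvec_abs_normalized[OF y y0 True]
      unfolding eigvec_of_def sign_diag_def by (simp add: mult.commute)
  next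
    case False
    then show ?thesis
      using y unfolding is_eigpair_def vecs_def eigvec_of_def by simp
  qed
qed

subsection \<open>Finiteness of the stabilizing group\<close>

lemma D0_phase_relation:
  assumes f: "f \<in> D0 m n B" and phase: "\<forall>j<n. f j = cis (\<theta> j)"
    and i: "i < n" and "is": "is \<in> idx_lists (m - 1) n" and "B (i # is) \<noteq> 0"
  shows "\<exists>k::int. real (m - 1) * \<theta> i = sum_list (map \<theta> is) + 2 * pi * of_int k"
proof -
  have "map f is = map (\<lambda>j. cis (\<theta> j)) is"
    using phase "is" by (auto dest: idx_lists_entry)
  then have "cis (sum_list (map \<theta> is)) = prod_list (map f is)"
    by (simp only: cis_prod_list_map)
  also have "\<dots> = cis (\<theta> i) ^ (m - 1)"
    using D0_entry_rel[OF f i "is" assms(5)] phase i by simp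
  also have "\<dots> = cis (real (m - 1) * \<theta> i)"
    by (rule Complex.DeMoivre)
  finally show ?thesis
    using cis_eq_imp_2pi_multiple by metis
qed

lemma D0_small_phase_exact:
  assumes f: "f \<in> D0 m n B" and phase: "\<forall>j<n. f j = cis (\<theta> j)"
    and small: "\<forall>j<n. \<bar>\<theta> j\<bar> < pi / m"
    and i: "i < n" and "is": "is \<in> idx_lists (m - 1) n" and nz: "B (i # is) \<noteq> 0"
  shows "real (m - 1) * \<theta> i = sum_list (map \<theta> is)"
proof -
  obtain k :: int where k: "real (m - 1) * \<theta> i = sum_list (map \<theta> is) + 2 * pi * of_int k"
    using D0_phase_relation[OF f phase i "is" nz] by blast
  have "\<bar>real (m - 1) * \<theta> i\<bar> = real (m - 1) * \<bar>\<theta> i\<bar>"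
    by (simp add: abs_mult)
  also have "\<dots> \<le> real (m - 1) * (pi / m)"
    using small i by (intro mult_left_mono) (auto simp: less_imp_le)
  finally have "\<bar>real (m - 1) * \<theta> i\<bar> \<le> real (m - 1) * (pi / m)" .
  moreover have "\<bar>sum_list (map \<theta> is)\<bar> \<le> real (m - 1) * (pi / m)"
    using abs_sum_list_map_le[of "is" \<theta> "pi / m"] small idx_lists_length[OF "is"]
    by (auto dest: idx_lists_entry[OF "is"] intro: less_imp_le)
  moreover have "real (m - 1) * (pi / m) < pi"
    using pi_gt_zero order_ge_2 by (simp add: field_simps of_nat_diff)
  ultimately have "\<bar>2 * pi * of_int k\<bar> < 2 * pi"
    using k by linarith
  then have "k = 0"
    using pi_gt_zero by (simp add: abs_mult)
  then show ?thesis
    using k by simp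
qed

text \<open>For phases in \<open>(-pi/m, pi/m)\<close> the congruences defining \<open>D0\<close> hold as exact equations,
  and these force the maximal phase to spread to all indices.\<close>

lemma D0_small_phase_trivial:
  assumes f: "f \<in> D0 m n B" and phase: "\<forall>j<n. f j = cis (\<theta> j)"
    and small: "\<forall>j<n. \<bar>\<theta> j\<bar> < pi / m" and j: "j < n"
  shows "\<theta> j = 0"
proof -
  obtain i0 where i0: "i0 < n" "\<forall>j<n. \<theta> j \<le> \<theta> i0"
    using ex_max_below[OF dim_pos, of \<theta>] by blast
  have const: "\<theta> j = \<theta> i0" if "j < n" for j
  proof (rule weakly_irreducible_propagate[OF weakly_irr i0(1), of "\<lambda>i. \<theta> i = \<theta> i0"])
    fix i j
    assume i: "\<theta> i = \<theta> i0" and edge: "(i, j) \<in> wi_edges m n B"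
    obtain "is" where "is": "is \<in> idx_lists (m - 1) n" "0 < B (i # is)" "j \<in> set is"
      using edge_imp_pos_entry[OF edge] by blast
    have "sum_list (map \<theta> is) = real (length is) * \<theta> i0"
      using D0_small_phase_exact[OF f phase small, of i "is"] edge_less[OF edge] "is" i
        idx_lists_length[OF "is"(1)] by simp
    then show "\<theta> j = \<theta> i0"
      using sum_list_map_eq_bound_imp_eq[of "is" \<theta> "\<theta> i0" j] i0(2) "is" by (auto dest: idx_lists_entry)
  qed (use that in simp_all)
  have "pi / m \<le> pi"
    using order_ge_2 pi_gt_zero by (simp add: field_simps)
  then have "\<theta> 0 = 0"
    using cis_eq_1_imp_zero[of "\<theta> 0"] phase small D0_first[OF f] dim_pos by fastforce
  then show ?thesis
    using const[OF j] const[OF dim_pos] by simp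
qed

lemma D0_eq_of_close_args:
  assumes d: "d \<in> D0 m n B" and e: "e \<in> D0 m n B"
    and close: "\<forall>j<n. \<bar>Arg (d j) - Arg (e j)\<bar> < pi / m"
  shows "d = e"
proof -
  define \<theta> where "\<theta> j = Arg (d j) - Arg (e j)" for j
  have "(\<lambda>j. d j * inverse (e j)) \<in> D0 m n B"
    using D0_mult[OF order_pos d D0_inverse[OF order_pos e]] .
  moreover have "\<forall>j<n. d j * inverse (e j) = cis (\<theta> j)"
    using D0_unimodular[OF d] D0_unimodular[OF e]
    by (simp add: \<theta>_def cis_divide[symmetric] cis_Arg_unimodular divide_inverse)
  ultimately have theta_zero: "\<theta> j = 0" if "j < n" for j
    using D0_small_phase_trivial[of "\<lambda>j. d j * inverse (e j)" \<theta> j] close that unfolding \<theta>_def by blast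
  show ?thesis
  proof
    fix j
    show "d j = e j"
    proof (cases "j < n")
      case True
      then have "Arg (d j) = Arg (e j)"
        using theta_zero[OF True] unfolding \<theta>_def by simp
      then show ?thesis
        using cis_Arg_unimodular[OF D0_unimodular[OF d True]] cis_Arg_unimodular[OF D0_unimodular[OF e True]]
        by metis
    qed (simp add: D0_outside[OF d] D0_outside[OF e])
  qed
qed

text \<open>Rounding \<open>m * Arg / pi\<close> to an integer therefore maps \<open>D0\<close> injectively into a finite set.\<close>

lemma finite_D0: "finite (D0 m n B)"
proof -
  define key where "key d j = (if j < n then \<lfloor>(m / pi) * Arg (d j)\<rfloor> else 0)" for d :: "nat \<Rightarrow> complex" and j
  have "inj_on key (D0 m n B)"
  proof (rule inj_onI)
    fix d e
    assume d: "d \<in> D0 m n B" and e: "e \<in> D0 m n B" and eq: "key d = key e"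
    have "\<bar>Arg (d j) - Arg (e j)\<bar> < pi / m" if "j < n" for j
      using floor_mult_eq_imp_dist_less[of "m / pi" "Arg (d j)" "Arg (e j)"] fun_cong[OF eq, of j] that
        order_ge_2 pi_gt_zero unfolding key_def by simp
    then show "d = e"
      using D0_eq_of_close_args[OF d e] by blast
  qed
  moreover have "key ` D0 m n B \<subseteq> {k. \<forall>j. (j \<in> {0..<n} \<longrightarrow> k j \<in> {- int m..int m}) \<and> (j \<notin> {0..<n} \<longrightarrow> k j = 0)}"
  proof -
    have "\<bar>(m / pi) * Arg z\<bar> \<le> real m" for z
    proof -
      have "\<bar>Arg z\<bar> \<le> pi"
        using Arg_bounded[of z] by auto
      then have "real m * \<bar>Arg z\<bar> \<le> real m * pi"
        by (intro mult_left_mono) auto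
      then show ?thesis
        using pi_gt_zero by (simp add: abs_mult abs_divide divide_le_eq)
    qed
    then have "- int m \<le> \<lfloor>(m / pi) * Arg z\<rfloor> \<and> \<lfloor>(m / pi) * Arg z\<rfloor> \<le> int m" for z
      unfolding le_floor_iff floor_le_iff abs_le_iff by (smt (verit) of_int_minus of_int_of_nat_eq)
    then show ?thesis
      unfolding key_def by auto
  qed
  moreover have "finite {k. \<forall>j. (j \<in> {0..<n} \<longrightarrow> k j \<in> {- int m..int m}) \<and> (j \<notin> {0..<n} \<longrightarrow> k j = 0)}"
    by (rule finite_set_of_finite_funs) auto
  ultimately show ?thesis
    using finite_imageD finite_subset by blast
qed

subsection \<open>The group of eigenvector classes\<close>

definition eig_class :: "(nat \<Rightarrow> complex) \<Rightarrow> (nat \<Rightarrow> complex) set" where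
  "eig_class d = pclass (eigvec_of d)"

definition eig_group :: "(nat \<Rightarrow> complex) set monoid" where
  "eig_group = \<lparr>carrier = PV m n B (complex_of_real rho), monoid.mult = qhprod n pv,
     one = pclass (\<lambda>i. complex_of_real (pv i))\<rparr>"

lemma eig_class_in_PV: "d \<in> D0 m n B \<Longrightarrow> eig_class d \<in> PV m n B (complex_of_real rho)"
  unfolding eig_class_def PV_def using eigvec_of_D0 by blast

lemma prep_eig_class: "d \<in> D0 m n B \<Longrightarrow> prep (eig_class d) = eigvec_of d"
  unfolding eig_class_def using perron_vec_props(3) dim_pos D0_first
  by (intro prep_pclass) (simp add: eigvec_of_def)

lemma PV_eq_eig_class:
  assumes "P \<in> PV m n B (complex_of_real rho)"
  shows "sign_diag (prep P) \<in> D0 m n B" and "eig_class (sign_diag (prep P)) = P"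
proof -
  obtain y where y: "is_eigpair m n B (complex_of_real rho) y" and P: "P = pclass y"
    using assms unfolding PV_def by blast
  have y0: "y 0 \<noteq> 0"
    using eigvec_nonzero[OF y dim_pos] .
  define z where "z i = inverse (y 0) * y i" for i
  have z: "is_eigpair m n B (complex_of_real rho) z"
    unfolding z_def using is_eigpair_scale[OF y] y0 by simp
  have "z 0 = 1"
    using y0 unfolding z_def by simp
  moreover have "P = pclass z"
    unfolding P z_def using pclass_scale[of "inverse (y 0)" y] y0 by simp
  ultimately have "prep P = z"
    by (simp add: prep_pclass)
  then show "sign_diag (prep P) \<in> D0 m n B" and "eig_class (sign_diag (prep P)) = P"
    using sign_diag_D0[OF z \<open>z 0 = 1\<close>] eigvec_eq_eigvec_of_sign_diag[OF z \<open>z 0 = 1\<close>]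
    unfolding eig_class_def \<open>P = pclass z\<close> by simp_all
qed

lemma bij_betw_eig_class: "bij_betw eig_class (D0 m n B) (PV m n B (complex_of_real rho))"
proof (rule bij_betw_byWitness[of _ "\<lambda>P. sign_diag (prep P)"])
  show "\<forall>d\<in>D0 m n B. sign_diag (prep (eig_class d)) = d"
    by (simp add: prep_eig_class sign_diag_eigvec_of)
qed (use PV_eq_eig_class eig_class_in_PV in auto)

lemma qhprod_eq_eig_class:
  "qhprod n pv P Q = eig_class (\<lambda>i. sign_diag (prep P) i * sign_diag (prep Q) i)"
  unfolding qhprod_def eig_class_def eigvec_of_def sign_diag_def by (simp cong: if_cong)

lemma eig_class_iso: "eig_class \<in> iso (D0_group m n B) eig_group"
proof -
  have "eig_class (\<lambda>i. d i * e i) = qhprod n pv (eig_class d) (eig_class e)"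
    if "d \<in> D0 m n B" "e \<in> D0 m n B" for d e
    using that by (simp add: qhprod_eq_eig_class prep_eig_class sign_diag_eigvec_of)
  then show ?thesis
    using bij_betw_eig_class eig_class_in_PV
    unfolding iso_def hom_def D0_group_def eig_group_def by (auto simp: bij_betw_def)
qed

lemma eig_group_comm_group: "comm_group eig_group"
proof -
  interpret D0: comm_group "D0_group m n B"
    by (rule D0_group_comm_group[OF order_pos])
  have "eigvec_of (\<lambda>_. 1) = (\<lambda>i. complex_of_real (pv i))"
    using perron_vec_props(1) unfolding eigvec_of_def vecs_def by auto
  then have "eig_class (\<lambda>_. 1) = pclass (\<lambda>i. complex_of_real (pv i))"
    unfolding eig_class_def by simp
  then have "eig_group\<lparr>one := eig_class \<one>\<^bsub>D0_group m n B\<^esub>\<rparr> = eig_group"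
    by (simp add: D0_group_def eig_group_def)
  then show ?thesis
    using D0.iso_imp_img_comm_group[OF eig_class_iso] by simp
qed

lemma eig_group_iso_D0_group: "eig_group \<cong> D0_group m n B"
proof -
  interpret D0: comm_group "D0_group m n B"
    by (rule D0_group_comm_group[OF order_pos])
  show ?thesis
    using D0.iso_sym eig_class_iso unfolding is_iso_def by blast
qed

end

section \<open>Z-tensors\<close>

lemma tapp_shift:
  fixes x :: "nat \<Rightarrow> 'a::real_field"
  assumes AsB: "\<forall>is\<in>idx_lists m n. A is = s * ident_tensor is - B is" and m: "1 \<le> m" and i: "i < n"
  shows "tapp m n (\<lambda>is. of_real (A is)) x i
    = of_real s * x i ^ (m - 1) - tapp m n (\<lambda>is. of_real (B is)) x i"
proof -
  have "tapp m n (\<lambda>is. of_real (A is)) x i = (\<Sum>is\<in>idx_lists (m - 1) n.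
      of_real s * (of_real (ident_tensor (i # is)) * prod_list (map x is)) - of_real (B (i # is)) * prod_list (map x is))"
    unfolding tapp_def
  proof (rule sum.cong[OF refl])
    fix "is"
    assume "is \<in> idx_lists (m - 1) n"
    then have "A (i # is) = s * ident_tensor (i # is) - B (i # is)"
      using AsB Cons_in_idx_lists_iff[of i "is" "m - 1" n] i m by simp
    then have eq: "of_real (A (i # is)) = of_real s * of_real (ident_tensor (i # is)) - (of_real (B (i # is)) :: 'a)"
      by simp
    show "of_real (A (i # is)) * prod_list (map x is)
        = of_real s * (of_real (ident_tensor (i # is)) * prod_list (map x is)) - of_real (B (i # is)) * prod_list (map x is)"
      unfolding eq by (simp add: algebra_simps)
  qed
  also have "\<dots> = of_real s * tapp m n (\<lambda>is. of_real (ident_tensor is)) x i - tapp m n (\<lambda>is. of_real (B is)) x i"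
    unfolding tapp_def sum_subtractf sum_distrib_left ..
  finally show ?thesis
    by (simp add: tapp_ident[OF m i])
qed

lemma tapp_shift_eigen_iff:
  fixes x :: "nat \<Rightarrow> 'a::real_field"
  assumes "\<forall>is\<in>idx_lists m n. A is = s * ident_tensor is - B is" and "1 \<le> m" and "i < n"
  shows "tapp m n (\<lambda>is. of_real (A is)) x i = of_real (s - mu) * x i ^ (m - 1) \<longleftrightarrow>
    tapp m n (\<lambda>is. of_real (B is)) x i = of_real mu * x i ^ (m - 1)"
  unfolding tapp_shift[OF assms] of_real_diff by (auto simp: algebra_simps)

lemma is_eigpair_shift:
  assumes "\<forall>is\<in>idx_lists m n. A is = s * ident_tensor is - B is" and "1 \<le> m"
  shows "is_eigpair m n A (complex_of_real (s - mu)) y \<longleftrightarrow> is_eigpair m n B (complex_of_real mu) y"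
proof -
  have "(\<forall>i<n. tapp m n (\<lambda>is. complex_of_real (A is)) y i = complex_of_real (s - mu) * y i ^ (m - 1)) \<longleftrightarrow>
      (\<forall>i<n. tapp m n (\<lambda>is. complex_of_real (B is)) y i = complex_of_real mu * y i ^ (m - 1))"
    using tapp_shift_eigen_iff[OF assms] by blast
  then show ?thesis
    unfolding is_eigpair_def by (simp only:)
qed

lemma H_eigenvalue_shift:
  assumes "\<forall>is\<in>idx_lists m n. A is = s * ident_tensor is - B is" and "1 \<le> m"
  shows "H_eigenvalue m n A (s - mu) \<longleftrightarrow> H_eigenvalue m n B mu"
proof -
  have "(\<forall>i<n. tapp m n A x i = (s - mu) * x i ^ (m - 1)) \<longleftrightarrow> (\<forall>i<n. tapp m n B x i = mu * x i ^ (m - 1))"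
    for x :: "nat \<Rightarrow> real"
    using tapp_shift_eigen_iff[OF assms, where 'a = real] by (simp add: of_real_eq_id)
  then show ?thesis
    unfolding H_eigenvalue_def by (simp only:)
qed

lemma D0_shift:
  assumes AsB: "\<forall>is\<in>idx_lists m n. A is = s * ident_tensor is - B is" and m: "1 \<le> m"
  shows "D0 m n A = D0 m n B"
proof -
  have "A l = 0 \<or> prod_list (map d (tl l)) = d (hd l) ^ (m - 1) \<longleftrightarrow>
      B l = 0 \<or> prod_list (map d (tl l)) = d (hd l) ^ (m - 1)"
    if l: "l \<in> idx_lists m n" for l and d :: "nat \<Rightarrow> complex"
  proof (cases "\<forall>j\<in>set l. j = hd l")
    case True
    then have "tl l = replicate (m - 1) (hd l)"
      using l unfolding idx_lists_def by (cases l) (auto simp: replicate_length_same)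
    then show ?thesis
      by simp
  next
    case False
    then have "ident_tensor l = 0"
      unfolding ident_tensor_def by simp
    then have "A l = - B l"
      using AsB l by simp
    then show ?thesis
      by simp
  qed
  then have "(\<forall>l\<in>idx_lists m n. A l = 0 \<or> prod_list (map d (tl l)) = d (hd l) ^ (m - 1)) \<longleftrightarrow>
      (\<forall>l\<in>idx_lists m n. B l = 0 \<or> prod_list (map d (tl l)) = d (hd l) ^ (m - 1))"
    for d :: "nat \<Rightarrow> complex"
    by blast
  then show ?thesis
    unfolding set_eq_iff D0_iff[OF m] by (simp only: simp_thms)
qed

lemma wi_edges_shift:
  assumes AsB: "\<forall>is\<in>idx_lists m n. A is = s * ident_tensor is - B is" and m: "1 \<le> m"
  shows "wi_edges m n A = wi_edges m n B"
proof -
  have "A (i # is) = - B (i # is)"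
    if "i < n" "is \<in> idx_lists (m - 1) n" "j \<in> set is" "j \<noteq> i" for i j "is"
  proof -
    have "ident_tensor (i # is) = 0"
      using that(3,4) unfolding ident_tensor_def by auto
    then show ?thesis
      using AsB Cons_in_idx_lists_iff[of i "is" "m - 1" n] that(1,2) m by simp
  qed
  then have "(\<exists>is\<in>idx_lists (m - 1) n. A (i # is) \<noteq> 0 \<and> j \<in> set is) \<longleftrightarrow>
      (\<exists>is\<in>idx_lists (m - 1) n. B (i # is) \<noteq> 0 \<and> j \<in> set is)"
    if "i < n" "j \<noteq> i" for i j
    using that by (metis neg_equal_0_iff_equal)
  then show ?thesis
    unfolding wi_edges_def by blast
qed

lemma weakly_irreducible_shift:
  assumes "\<forall>is\<in>idx_lists m n. A is = s * ident_tensor is - B is" and "1 \<le> m"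
  shows "weakly_irreducible m n A \<longleftrightarrow> weakly_irreducible m n B"
  unfolding weakly_irreducible_iff wi_edges_shift[OF assms] ..

lemma (in nonneg_wi_tensor) lambda_min_shift:
  assumes "\<forall>is\<in>idx_lists m n. A is = s * ident_tensor is - B is"
  shows "lambda_min m n A = s - rho"
  unfolding lambda_min_def
proof (rule Least_equality)
  show "H_eigenvalue m n A (s - rho)"
    using H_eigenvalue_rho H_eigenvalue_shift[OF assms order_pos] by simp
  show "s - rho \<le> lam" if "H_eigenvalue m n A lam" for lam
    using H_eigenvalue_le_rho[of "s - lam"] that H_eigenvalue_shift[OF assms order_pos, of "s - lam"]
    by simp
qed

theorem lemma3p2:
  fixes m n :: nat and A B :: "nat list \<Rightarrow> real" and s :: real
  assumes "m \<ge> 2" and "n \<ge> 1"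
    and "s > 0"
    and "\<forall>is\<in>idx_lists m n. B is \<ge> 0"
    and "\<forall>is\<in>idx_lists m n. A is = s * ident_tensor is - B is"
    and "weakly_irreducible m n A"
  shows "finite (PV m n A (complex_of_real (lambda_min m n A))) \<and>
         comm_group (PV_group m n A B) \<and> PV_group m n A B \<cong> D0_group m n A \<and>
         stabilizing_index m n A = card (PV m n A (complex_of_real (lambda_min m n A)))"
proof -
  have m: "1 \<le> m"
    using assms(1) by simp
  have "weakly_irreducible m n B"
    using assms(6) weakly_irreducible_shift[OF assms(5) m] by simp
  then interpret nonneg_wi_tensor m n B
    using assms(1,2,4) by unfold_locales auto
  have PV_eq: "PV m n A (complex_of_real (lambda_min m n A)) = PV m n B (complex_of_real rho)"
    unfolding PV_def lambda_min_shift[OF assms(5)] is_eigpair_shift[OF assms(5) m] ..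
  have group_eq: "PV_group m n A B = eig_group"
    unfolding PV_group_def eig_group_def PV_eq ..
  have D0_eq: "D0 m n A = D0 m n B"
    by (rule D0_shift[OF assms(5) m])
  show ?thesis
    unfolding PV_eq group_eq stabilizing_index_def D0_eq
  proof (intro conjI)
    show "finite (PV m n B (complex_of_real rho))"
      using bij_betw_finite[OF bij_betw_eig_class] finite_D0 by simp
    show "card (D0 m n B) = card (PV m n B (complex_of_real rho))"
      by (rule bij_betw_same_card[OF bij_betw_eig_class])
    show "eig_group \<cong> D0_group m n A"
      unfolding D0_group_def D0_eq by (fold D0_group_def) (rule eig_group_iso_D0_group)
  qed (rule eig_group_comm_group)
qed

end
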